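(* Let $n\ge1$ and let $f\in\mathcal{C}^{2}(\mathbb{B}^{n})$ satisfy $\mathrm{Re}\big(f\overline{\Delta f}\big)\ge0$ in $\mathbb{B}^n$. Then for $p\ge2$ and $\alpha\ge2$, $$\int_{\mathbb{B}^{n}}(1-|z|^{2})^{\alpha}\,\Delta\big(|f(z)|^{p}\big)\,dV_{N}(z)<\infty$$ if and only if $f\in b_{\alpha-2,p}(\mathbb{B}^{n})$.
   Context: $\mathbb{B}^n$ is the open unit ball of $\mathbb{C}^n$, $d(z)=1-|z|$, $dV_N$ the normalized volume measure, $\Delta=4\sum_k\partial^2/\partial z_k\partial\overline{z}_k$. For $\nu>-1$ and $0<\mu<\infty$, the Bergman-type space $b_{\nu,\mu}(\mathbb{B}^n)$ consists of all continuous complex-valued $f$ on $\mathbb{B}^n$ with $\int_{\mathbb{B}^n}d(z)^{\nu}|f(z)|^{\mu}\,dV_N(z)<\infty$ (norm $|f(0)|+(\int_{\mathbb{B}^n}d^\nu|f|^\mu dV_N)^{1/\mu}$). *)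

theory Defs
  imports "HOL-Analysis.Analysis"
begin

text \<open>The open unit ball of C^n is ball 0 1 in complex^'n (Euclidean norm).
  Real partial derivatives are taken along the real basis Basis of complex^'n
  (the 2n real coordinate directions).\<close>

definition partial_dir :: "('a::euclidean_space \<Rightarrow> 'b::real_normed_vector) \<Rightarrow> 'a \<Rightarrow> 'a \<Rightarrow> 'b" where
  "partial_dir g v x = frechet_derivative g (at x) v"

definition C2_on :: "'a::euclidean_space set \<Rightarrow> ('a \<Rightarrow> 'b::real_normed_vector) \<Rightarrow> bool" where
  "C2_on S g \<longleftrightarrow> g differentiable_on S \<and>
     (\<forall>b\<in>Basis. (\<lambda>x. partial_dir g b x) differentiable_on S) \<and>
     (\<forall>b\<in>Basis. \<forall>c\<in>Basis. continuous_on S (\<lambda>x. partial_dir (\<lambda>y. partial_dir g b y) c x))"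

text \<open>Laplacian: sum of the pure second partials in all real directions;
  for complex^'n this is 4 \<Sum> d^2/dz_k dzbar_k.\<close>
definition laplacian :: "('a::euclidean_space \<Rightarrow> 'b::real_normed_vector) \<Rightarrow> 'a \<Rightarrow> 'b" where
  "laplacian g x = (\<Sum>b\<in>Basis. partial_dir (\<lambda>y. partial_dir g b y) b x)"

definition dVN :: "'a::euclidean_space measure" where
  "dVN = uniform_measure lborel (ball 0 1)"

definition b_space :: "real \<Rightarrow> real \<Rightarrow> (complex^'n \<Rightarrow> complex) set" where
  "b_space \<nu> \<mu> = {f. continuous_on (ball 0 1) f \<and>
     (\<integral>\<^sup>+ z. ennreal ((1 - norm z) powr \<nu> * norm (f z) powr \<mu>) \<partial>dVN) < \<infinity>}"

end

theory Submission
  imports Defs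
begin

(*
  Let u = |f|^p. The chain rule gives
    Delta u = p |f|^(p-2) (sum_b |d_b f|^2 + Re (conj f * Delta f)) + p (p-2) |f|^(p-4) sum_b (Re (conj f * d_b f))^2,
  which is nonnegative under the hypothesis Re (f * conj (Delta f)) >= 0.  Green's identity against
  the cutoff W_r = (r^2 - |z|^2)_+^alpha, r < 1, gives  int W_r Delta u = int u Delta W_r  with
    Delta W_r = 4 alpha (alpha-1) |z|^2 (r^2-|z|^2)^(alpha-2) - 2 alpha N (r^2-|z|^2)^(alpha-1),
  N the real dimension; it is obtained coordinatewise from int d_b(W_r d_b u - u d_b W_r) = 0, the flux
  being continuous, compactly supported and differentiable along lines off the sphere |z| = r.
  The positive term of Delta W_r is at most a constant times (1-|z|)^(alpha-2), which bounds the weighted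
  integral of Delta u by that of u.  Conversely, near the sphere Delta W_r dominates
  alpha (r^2-|z|^2)^(alpha-2), while on a smaller ball everything is bounded, so the weighted
  integral of u is bounded by that of Delta u plus a constant.  Monotone convergence lets r -> 1.
*)

section \<open>Derivatives of \<open>|w|\<^sup>p\<close>\<close>

lemma has_derivative_zero_if_small:
  fixes F :: "'a::real_normed_vector \<Rightarrow> real"
  assumes F0: "F x = 0"
    and small: "\<And>e. e > 0 \<Longrightarrow> eventually (\<lambda>y. \<bar>F y\<bar> \<le> e * norm (y - x)) (at x)"
  shows "(F has_derivative (\<lambda>_. 0)) (at x)"
  unfolding has_derivative_at_within
proof (intro conjI)
  show "bounded_linear (\<lambda>_. 0::real)" by simp
  show "((\<lambda>y. (F y - F x - 0) /\<^sub>R norm (y - x)) \<longlongrightarrow> 0) (at x within UNIV)"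
  proof (rule tendstoI)
    fix e :: real assume e: "e > 0"
    have "eventually (\<lambda>y. \<bar>F y\<bar> \<le> (e/2) * norm (y - x)) (at x)" using small[of "e/2"] e by simp
    moreover have "eventually (\<lambda>y. y \<noteq> x) (at x)" by (simp add: eventually_at_filter)
    ultimately show "eventually (\<lambda>y. dist ((F y - F x - 0) /\<^sub>R norm (y - x)) 0 < e) (at x within UNIV)"
    proof eventually_elim
      case (elim y)
      then have n: "norm (y - x) > 0" by simp
      have "\<bar>F y\<bar> / norm (y - x) \<le> e/2" using elim n by (simp add: divide_le_eq)
      moreover have "dist ((F y - F x - 0) /\<^sub>R norm (y - x)) 0 = \<bar>F y\<bar> / norm (y - x)"
        using n F0 by (simp add: dist_norm abs_mult divide_inverse mult.commute)
      ultimately show ?case using e by linarith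
    qed
  qed
qed

lemma Re_cnj_mult_eq_inner: "Re (cnj w * h) = w \<bullet> h"
  by (simp add: inner_complex_def)

lemma abs_Re_cnj_mult_le: "\<bar>Re (cnj w * h)\<bar> \<le> norm w * norm h"
  by (metis abs_Re_le_cmod complex_mod_cnj norm_mult)

lemma has_derivative_norm_inner:
  fixes w :: "'a::real_inner"
  assumes "w \<noteq> 0"
  shows "(norm has_derivative (\<lambda>h. (w \<bullet> h) / norm w)) (at w within S)"
proof -
  have "(norm has_derivative (\<lambda>h. h \<bullet> sgn w)) (at w)" by (rule has_derivative_norm[OF assms])
  moreover have "(\<lambda>h. h \<bullet> sgn w) = (\<lambda>h. (w \<bullet> h) / norm w)"
    by (auto simp: sgn_div_norm inner_commute divide_inverse mult.commute)
  ultimately show ?thesis by (simp add: has_derivative_at_withinI)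
qed

text \<open>The weight \<open>|w|\<^sup>p\<^sup>-\<^sup>2\<close>, with the value 1 forced at \<open>p = 2\<close> since \<open>0 powr 0 = 0\<close>.\<close>

definition norm_powr_weight :: "real \<Rightarrow> complex \<Rightarrow> real" where
  "norm_powr_weight p w = (if p = 2 then 1 else norm w powr (p - 2))"

definition norm_powr_deriv :: "real \<Rightarrow> complex \<Rightarrow> complex \<Rightarrow> real" where
  "norm_powr_deriv p w h = p * norm_powr_weight p w * Re (cnj w * h)"

definition norm_powr_cross :: "real \<Rightarrow> complex \<Rightarrow> complex \<Rightarrow> complex \<Rightarrow> real" where
  "norm_powr_cross p w k h = (p - 2) * norm w powr (p - 4) * Re (cnj w * k) * Re (cnj w * h)"

text \<open>The derivative of \<open>(w, h) \<mapsto> norm_powr_deriv p w h\<close> in direction \<open>(k, l)\<close>; with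
  \<open>h = k = \<partial>\<^sub>bf\<close> and \<open>l = \<partial>\<^sub>b\<^sup>2f\<close> it is the pure second partial \<open>\<partial>\<^sub>b\<^sup>2|f|\<^sup>p\<close>.\<close>

definition norm_powr_deriv2 :: "real \<Rightarrow> complex \<Rightarrow> complex \<Rightarrow> complex \<Rightarrow> complex \<Rightarrow> real" where
  "norm_powr_deriv2 p w h k l =
     p * norm_powr_weight p w * (Re (cnj k * h) + Re (cnj w * l)) + p * norm_powr_cross p w k h"

lemma norm_powr_weight_nonzero: "w \<noteq> 0 \<Longrightarrow> norm_powr_weight p w = norm w powr (p - 2)"
  by (simp add: norm_powr_weight_def)

lemma norm_powr_weight_nonneg: "norm_powr_weight p w \<ge> 0"
  by (simp add: norm_powr_weight_def)

lemma norm_powr_diff_2: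
  assumes "w \<noteq> 0"
  shows "norm w powr (p - 2) = norm w powr (p - 4) * (norm w * norm w)"
proof -
  have "norm w powr (p - 2) = norm w powr ((p - 4) + 2)" by simp
  also have "\<dots> = norm w powr (p - 4) * norm w powr 2" by (rule powr_add)
  finally show ?thesis using assms by (simp add: powr_numeral power2_eq_square)
qed

lemma has_derivative_norm_powr_zero:
  assumes p: "p > 1"
  shows "((\<lambda>w::'a::real_normed_vector. norm w powr p) has_derivative (\<lambda>_. 0)) (at 0)"
proof (rule has_derivative_zero_if_small)
  fix e :: real assume e: "e > 0"
  have "((\<lambda>y::'a. norm y powr (p - 1)) \<longlongrightarrow> 0) (at 0)"
    using p by (intro tendsto_zero_powrI) (auto intro!: tendsto_eq_intros)
  then have "eventually (\<lambda>y::'a. norm y powr (p - 1) < e) (at 0)"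
    using e by (rule order_tendstoD)
  then show "eventually (\<lambda>y::'a. \<bar>norm y powr p\<bar> \<le> e * norm (y - 0)) (at 0)"
  proof eventually_elim
    case (elim y)
    show ?case
    proof (cases "y = 0")
      case False
      then have "norm y powr p = norm y powr (p - 1) * norm y" by (simp add: powr_diff)
      also have "\<dots> \<le> e * norm y" using elim by (intro mult_right_mono) auto
      finally show ?thesis by simp
    qed (use e in simp)
  qed
qed simp

lemma has_derivative_norm_powr:
  assumes p: "p \<ge> 2"
  shows "((\<lambda>w. norm w powr p) has_derivative norm_powr_deriv p w) (at w)"
proof (cases "w = 0")
  case False
  have "((\<lambda>w. norm w powr p) has_derivative
      (\<lambda>h. (norm w powr p) * (0 * ln (norm w) + (w \<bullet> h / norm w) * p / norm w))) (at w)"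
    using False by (auto intro!: derivative_eq_intros has_derivative_norm_inner)
  moreover have "(\<lambda>h. (norm w powr p) * (0 * ln (norm w) + (w \<bullet> h / norm w) * p / norm w))
      = norm_powr_deriv p w"
  proof
    fix h
    have "norm w powr p = norm w powr (p - 2) * norm w ^ 2"
      using False by (simp add: powr_diff powr_realpow)
    then show "(norm w powr p) * (0 * ln (norm w) + (w \<bullet> h / norm w) * p / norm w) = norm_powr_deriv p w h"
      using False
      by (simp add: norm_powr_deriv_def norm_powr_weight_nonzero inner_complex_def power2_eq_square field_simps)
  qed
  ultimately show ?thesis by simp
next
  case True
  moreover have "norm_powr_deriv p 0 = (\<lambda>_. 0)" by (auto simp: norm_powr_deriv_def)
  ultimately show ?thesis using has_derivative_norm_powr_zero[of p] p by simp
qed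

lemma norm_powr_cross_bound:
  assumes p: "p \<ge> 2"
  shows "\<bar>norm_powr_cross p w k h\<bar> \<le> (p - 2) * norm w powr (p - 2) * norm k * norm h"
proof (cases "w = 0")
  case True then show ?thesis by (simp add: norm_powr_cross_def)
next
  case False
  have "\<bar>norm_powr_cross p w k h\<bar> = (p - 2) * norm w powr (p - 4) * (\<bar>Re (cnj w * k)\<bar> * \<bar>Re (cnj w * h)\<bar>)"
    using p by (simp add: norm_powr_cross_def abs_mult)
  also have "\<dots> \<le> (p - 2) * norm w powr (p - 4) * ((norm w * norm k) * (norm w * norm h))"
    using p by (intro mult_left_mono mult_mono abs_Re_cnj_mult_le) auto
  also have "\<dots> = (p - 2) * norm w powr (p - 2) * norm k * norm h"
    unfolding norm_powr_diff_2[OF False] by (simp add: algebra_simps)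
  finally show ?thesis .
qed

lemma norm_powr_cross_diag_nonneg: "p \<ge> 2 \<Longrightarrow> norm_powr_cross p w k k \<ge> 0"
  by (simp add: norm_powr_cross_def mult.assoc)

lemma has_derivative_norm_fst:
  assumes "w \<noteq> (0::complex)"
  shows "((\<lambda>x::complex\<times>complex. norm (fst x)) has_derivative (\<lambda>y. (w \<bullet> fst y) / norm w)) (at (w,h))"
proof -
  have "(norm has_derivative (\<lambda>k. (w \<bullet> k) / norm w)) (at (fst (w,h)))"
    using has_derivative_norm_inner[OF assms, of UNIV] by simp
  with has_derivative_fst[OF has_derivative_ident] show ?thesis by (rule has_derivative_compose)
qed

lemma has_derivative_norm_powr_deriv_nonzero:
  assumes "w \<noteq> 0"
  shows "((\<lambda>x. norm_powr_deriv p (fst x) (snd x)) has_derivative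
           (\<lambda>y. norm_powr_deriv2 p w h (fst y) (snd y))) (at (w,h))"
proof -
  have weight: "((\<lambda>x. norm (fst x) powr (p - 2)) has_derivative
      (\<lambda>y. (p - 2) * norm w powr (p - 4) * (w \<bullet> fst y))) (at (w,h))"
  proof -
    have "((\<lambda>x. norm (fst x) powr (p - 2)) has_derivative
      (\<lambda>y. (norm w powr (p - 2)) * (0 * ln (norm w) + ((w \<bullet> fst y) / norm w) * (p - 2) / norm w))) (at (w,h))"
      using has_derivative_powr[OF has_derivative_norm_fst[OF assms] has_derivative_const] assms by simp
    moreover have "(\<lambda>y::complex\<times>complex. (norm w powr (p - 2)) * (0 * ln (norm w) + ((w \<bullet> fst y) / norm w) * (p - 2) / norm w))
       = (\<lambda>y. (p - 2) * norm w powr (p - 4) * (w \<bullet> fst y))"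
      using assms unfolding norm_powr_diff_2[OF assms] by (simp add: fun_eq_iff field_simps)
    ultimately show ?thesis by simp
  qed
  have "((\<lambda>x. Re (cnj (fst x) * snd x)) has_derivative (\<lambda>y. Re (cnj (fst y) * h) + Re (cnj w * snd y))) (at (w,h))"
    by (auto intro!: derivative_eq_intros simp: algebra_simps)
  from has_derivative_mult_right[OF has_derivative_mult[OF weight this], of p]
  have "((\<lambda>x. p * (norm (fst x) powr (p - 2) * Re (cnj (fst x) * snd x))) has_derivative
      (\<lambda>y. norm_powr_deriv2 p w h (fst y) (snd y))) (at (w,h))"
    unfolding norm_powr_deriv2_def norm_powr_cross_def norm_powr_weight_nonzero[OF assms]
    by (simp add: Re_cnj_mult_eq_inner[symmetric] algebra_simps)
  moreover have "open {x::complex\<times>complex. fst x \<noteq> 0}" by (intro open_Collect_neq continuous_intros)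
  ultimately show ?thesis
    by (rule has_derivative_transform_within_open)
       (use assms in \<open>auto simp: norm_powr_deriv_def norm_powr_weight_nonzero\<close>)
qed

lemma has_derivative_norm_powr_deriv_zero:
  assumes p: "p > 2"
  shows "((\<lambda>x. norm_powr_deriv p (fst x) (snd x)) has_derivative (\<lambda>_. 0)) (at (0,h))"
proof (rule has_derivative_zero_if_small)
  show "norm_powr_deriv p (fst (0, h)) (snd (0, h)) = 0" by (simp add: norm_powr_deriv_def)
  fix e :: real assume e: "e > 0"
  have "((\<lambda>y::complex\<times>complex. p * norm (fst y) powr (p - 2) * norm (snd y)) \<longlongrightarrow> p * 0 * norm h) (at (0,h))"
    using p by (intro tendsto_mult tendsto_const tendsto_zero_powrI) (auto intro!: tendsto_eq_intros)
  then have "eventually (\<lambda>y::complex\<times>complex. p * norm (fst y) powr (p - 2) * norm (snd y) < e) (at (0,h))"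
    using e by (intro order_tendstoD) auto
  then show "eventually (\<lambda>y. \<bar>norm_powr_deriv p (fst y) (snd y)\<bar> \<le> e * norm (y - (0,h))) (at (0,h))"
  proof eventually_elim
    case (elim y)
    have "\<bar>norm_powr_deriv p (fst y) (snd y)\<bar> = p * norm (fst y) powr (p - 2) * \<bar>Re (cnj (fst y) * snd y)\<bar>"
      using p by (simp add: norm_powr_deriv_def norm_powr_weight_def abs_mult)
    also have "\<dots> \<le> p * norm (fst y) powr (p - 2) * (norm (fst y) * norm (snd y))"
      using p by (intro mult_left_mono abs_Re_cnj_mult_le) auto
    also have "\<dots> = (p * norm (fst y) powr (p - 2) * norm (snd y)) * norm (fst y)" by simp
    also have "\<dots> \<le> e * norm (fst y)" using elim by (intro mult_right_mono) auto
    also have "\<dots> \<le> e * norm (y - (0,h))"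
      using e norm_fst_le[of "fst (y - (0,h))" "snd (y - (0,h))"] by (intro mult_left_mono) (cases y, auto)
    finally show ?case .
  qed
qed

lemma has_derivative_norm_powr_deriv:
  assumes p: "p \<ge> 2"
  shows "((\<lambda>x. norm_powr_deriv p (fst x) (snd x)) has_derivative
           (\<lambda>y. norm_powr_deriv2 p w h (fst y) (snd y))) (at (w,h))"
proof (cases "w = 0 \<and> p > 2")
  case True
  moreover have "(\<lambda>y. norm_powr_deriv2 p 0 h (fst y) (snd y)) = (\<lambda>_. 0)"
    using True by (auto simp: norm_powr_deriv2_def norm_powr_cross_def norm_powr_weight_def)
  ultimately show ?thesis using has_derivative_norm_powr_deriv_zero[of p h] by simp
next
  case False
  show ?thesis
  proof (cases "w = 0")
    case True
    with False p have "p = 2" by simp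
    have "((\<lambda>x. 2 * Re (cnj (fst x) * snd x)) has_derivative
        (\<lambda>y. 2 * Re (cnj (fst y) * h + cnj w * snd y))) (at (w,h))"
      by (auto intro!: derivative_eq_intros simp: algebra_simps)
    moreover have "(\<lambda>y. 2 * Re (cnj (fst y) * h + cnj w * snd y)) = (\<lambda>y. norm_powr_deriv2 p w h (fst y) (snd y))"
      using \<open>p = 2\<close> by (auto simp: norm_powr_deriv2_def norm_powr_cross_def norm_powr_weight_def algebra_simps)
    moreover have "(\<lambda>x. 2 * Re (cnj (fst x) * snd x)) = (\<lambda>x. norm_powr_deriv p (fst x) (snd x))"
      using \<open>p = 2\<close> by (auto simp: norm_powr_deriv_def norm_powr_weight_def)
    ultimately show ?thesis by simp
  qed (rule has_derivative_norm_powr_deriv_nonzero)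
qed

lemma continuous_on_norm_powr_cross:
  fixes a b c :: "'a::topological_space \<Rightarrow> complex"
  assumes p: "p \<ge> 2"
    and ca: "continuous_on S a" and cb: "continuous_on S b" and cc: "continuous_on S c"
  shows "continuous_on S (\<lambda>x. norm_powr_cross p (a x) (b x) (c x))"
  unfolding continuous_on_def
proof
  fix x assume x: "x \<in> S"
  have ta: "(a \<longlongrightarrow> a x) (at x within S)" and tb: "(b \<longlongrightarrow> b x) (at x within S)"
    and tc: "(c \<longlongrightarrow> c x) (at x within S)"
    using ca cb cc x by (auto simp: continuous_on_def)
  show "((\<lambda>x. norm_powr_cross p (a x) (b x) (c x)) \<longlongrightarrow> norm_powr_cross p (a x) (b x) (c x)) (at x within S)"
  proof (cases "a x = 0 \<and> p \<noteq> 2")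
    case True
    with p have p2: "p > 2" and a0: "a x = 0" by auto
    have "((\<lambda>y. (p - 2) * norm (a y) powr (p - 2) * norm (b y) * norm (c y))
        \<longlongrightarrow> (p - 2) * 0 * norm (b x) * norm (c x)) (at x within S)"
      using a0 p2 by (intro tendsto_intros ta tb tc tendsto_zero_powrI) (auto intro!: tendsto_eq_intros ta)
    then have lim0: "((\<lambda>y. (p - 2) * norm (a y) powr (p - 2) * norm (b y) * norm (c y)) \<longlongrightarrow> 0) (at x within S)"
      by simp
    have bd: "\<forall>y. norm (norm_powr_cross p (a y) (b y) (c y))
        \<le> (p - 2) * norm (a y) powr (p - 2) * norm (b y) * norm (c y)"
      using norm_powr_cross_bound[OF p] by (simp only: real_norm_def) blast
    have "((\<lambda>y. norm_powr_cross p (a y) (b y) (c y)) \<longlongrightarrow> 0) (at x within S)"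
      by (rule Lim_null_comparison[OF always_eventually[OF bd] lim0])
    then show ?thesis using a0 by (simp add: norm_powr_cross_def)
  next
    case False
    show ?thesis
    proof (cases "p = 2")
      case False
      with \<open>\<not> (a x = 0 \<and> p \<noteq> 2)\<close> have "a x \<noteq> 0" by blast
      then show ?thesis unfolding norm_powr_cross_def
        by (intro tendsto_intros ta tb tc tendsto_powr) auto
    qed (simp add: norm_powr_cross_def)
  qed
qed

lemma continuous_on_norm_powr_weight:
  fixes a :: "'a::topological_space \<Rightarrow> complex"
  assumes p: "p \<ge> 2" and ca: "continuous_on S a"
  shows "continuous_on S (\<lambda>x. norm_powr_weight p (a x))"
proof (cases "p = 2")
  case False
  with p ca have "continuous_on S (\<lambda>x. norm (a x) powr (p - 2))"
    by (intro continuous_on_powr' continuous_intros) auto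
  then show ?thesis using False by (simp add: norm_powr_weight_def)
qed (simp add: norm_powr_weight_def)

lemma continuous_on_norm_powr_deriv2:
  fixes a b c d :: "'a::topological_space \<Rightarrow> complex"
  assumes "p \<ge> 2" "continuous_on S a" "continuous_on S b" "continuous_on S c" "continuous_on S d"
  shows "continuous_on S (\<lambda>x. norm_powr_deriv2 p (a x) (b x) (c x) (d x))"
  unfolding norm_powr_deriv2_def
  by (intro continuous_intros continuous_on_norm_powr_weight continuous_on_norm_powr_cross assms)

lemma continuous_on_norm_powr_deriv:
  fixes a b :: "'a::topological_space \<Rightarrow> complex"
  assumes "p \<ge> 2" "continuous_on S a" "continuous_on S b"
  shows "continuous_on S (\<lambda>x. norm_powr_deriv p (a x) (b x))"
  unfolding norm_powr_deriv_def
  by (intro continuous_intros continuous_on_norm_powr_weight assms)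

section \<open>The cutoff \<open>(r\<^sup>2 - |y|\<^sup>2)\<^sub>+\<^sup>\<alpha>\<close>\<close>

lemma power2_norm_less_1: "norm y < 1 \<Longrightarrow> (norm y)\<^sup>2 < 1"
  by (simp add: power_less_one_iff abs_less_iff)

definition ball_defect :: "real \<Rightarrow> 'a::real_normed_vector \<Rightarrow> real" where
  "ball_defect r y = r\<^sup>2 - (norm y)\<^sup>2"

definition cutoff :: "real \<Rightarrow> real \<Rightarrow> 'a::real_normed_vector \<Rightarrow> real" where
  "cutoff \<alpha> r y = (max 0 (ball_defect r y)) powr \<alpha>"

definition cutoff_partial :: "real \<Rightarrow> real \<Rightarrow> 'a::real_inner \<Rightarrow> 'a \<Rightarrow> real" where
  "cutoff_partial \<alpha> r b y = -2 * \<alpha> * (y \<bullet> b) * (max 0 (ball_defect r y)) powr (\<alpha> - 1)"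

text \<open>The second derivative of \<open>cutoff\<close> along \<open>b\<close>, valid only inside \<open>ball 0 r\<close>.\<close>

definition cutoff_partial2 :: "real \<Rightarrow> real \<Rightarrow> 'a::real_inner \<Rightarrow> 'a \<Rightarrow> real" where
  "cutoff_partial2 \<alpha> r b y =
     -2 * \<alpha> * ball_defect r y powr (\<alpha> - 1) + 4 * \<alpha> * (\<alpha> - 1) * (y \<bullet> b)\<^sup>2 * ball_defect r y powr (\<alpha> - 2)"

definition cutoff_laplacian :: "real \<Rightarrow> real \<Rightarrow> 'a::euclidean_space \<Rightarrow> real" where
  "cutoff_laplacian \<alpha> r y =
     4 * \<alpha> * (\<alpha> - 1) * (norm y)\<^sup>2 * ball_defect r y powr (\<alpha> - 2)
     - 2 * \<alpha> * DIM('a) * ball_defect r y powr (\<alpha> - 1)"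

lemma ball_defect_pos: "norm y < r \<Longrightarrow> 0 < ball_defect r y"
  using power_strict_mono[of "norm y" r 2] unfolding ball_defect_def by simp

lemma ball_defect_nonpos: "r \<le> norm y \<Longrightarrow> 0 \<le> r \<Longrightarrow> ball_defect r y \<le> 0"
  using power_mono[of r "norm y" 2] unfolding ball_defect_def by simp

lemma ball_defect_le: "0 \<le> r \<Longrightarrow> r \<le> 1 \<Longrightarrow> ball_defect r y \<le> 1 - (norm y)\<^sup>2"
  using power_mono[of r 1 2] unfolding ball_defect_def by simp

lemma ball_defect_mono: "r \<le> r' \<Longrightarrow> 0 \<le> r \<Longrightarrow> ball_defect r y \<le> ball_defect r' y"
  using power_mono[of r r' 2] unfolding ball_defect_def by simp

lemma ball_defect_powr_le_1:
  assumes "y \<in> ball 0 r" "r \<le> 1" "0 \<le> e"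
  shows "ball_defect r y powr e \<le> 1"
proof -
  have "0 \<le> r" using assms(1) by (metis dual_order.trans mem_ball_0 norm_ge_zero order_less_imp_le)
  then have "ball_defect r y \<le> 1"
    using ball_defect_le[of r y] assms(2) zero_le_power2[of "norm y"] by linarith
  with ball_defect_pos[of y r] assms show ?thesis by (intro powr_le1) auto
qed

lemma ball_defect_add_scaleR_Basis:
  fixes z b :: "'a::euclidean_space"
  assumes "b \<in> Basis"
  shows "ball_defect r (z + t *\<^sub>R b) = ball_defect r z - 2 * (z \<bullet> b) * t - t * t"
  using assms
  by (simp add: ball_defect_def power2_norm_eq_inner inner_add_left inner_add_right inner_commute
      algebra_simps)

lemma inner_add_scaleR_Basis:
  "b \<in> Basis \<Longrightarrow> (z + t *\<^sub>R b) \<bullet> b = z \<bullet> b + t"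
  by (simp add: inner_add_left)

lemma finite_sphere_inter_line:
  fixes z b :: "'a::euclidean_space"
  assumes "b \<in> Basis"
  shows "finite {t. norm (z + t *\<^sub>R b) = r}"
proof -
  let ?c = "z \<bullet> b" and ?d = "(norm z)\<^sup>2 - r\<^sup>2"
  have "{t. norm (z + t *\<^sub>R b) = r} \<subseteq> {- ?c + sqrt (?c\<^sup>2 - ?d), - ?c - sqrt (?c\<^sup>2 - ?d)}"
  proof
    fix t assume "t \<in> {t. norm (z + t *\<^sub>R b) = r}"
    then have "ball_defect r (z + t *\<^sub>R b) = 0" by (simp add: ball_defect_def)
    then have "(t + ?c)\<^sup>2 = ?c\<^sup>2 - ?d"
      unfolding ball_defect_add_scaleR_Basis[OF assms]
      by (simp add: ball_defect_def power2_eq_square algebra_simps)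
    then have "\<bar>t + ?c\<bar> = sqrt (?c\<^sup>2 - ?d)" by (metis real_sqrt_abs)
    then show "t \<in> {- ?c + sqrt (?c\<^sup>2 - ?d), - ?c - sqrt (?c\<^sup>2 - ?d)}" by auto
  qed
  then show ?thesis by (rule finite_subset) simp
qed

lemma has_real_derivative_quadratic_powr:
  fixes s c \<alpha> :: real
  assumes "s > 0"
  shows "((\<lambda>t. (max 0 (s - 2 * c * t - t * t)) powr \<alpha>) has_real_derivative
           (-2 * \<alpha> * c * s powr (\<alpha> - 1))) (at 0)"
proof -
  have "((\<lambda>t. (s - 2 * c * t - t * t) powr \<alpha>) has_real_derivative
      ((s - 2 * c * 0 - 0 * 0) powr \<alpha>) * (0 * ln (s - 2 * c * 0 - 0 * 0)
        + (-2 * c - 2 * 0) * \<alpha> / (s - 2 * c * 0 - 0 * 0))) (at 0)"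
    by (rule DERIV_powr) (use assms in \<open>auto intro!: derivative_eq_intros\<close>)
  moreover have "((s - 2 * c * 0 - 0 * 0) powr \<alpha>) * (0 * ln (s - 2 * c * 0 - 0 * 0)
        + (-2 * c - 2 * 0) * \<alpha> / (s - 2 * c * 0 - 0 * 0)) = -2 * \<alpha> * c * s powr (\<alpha> - 1)"
    using assms by (simp add: powr_diff field_simps)
  ultimately have "((\<lambda>t. (s - 2 * c * t - t * t) powr \<alpha>) has_real_derivative (-2 * \<alpha> * c * s powr (\<alpha> - 1))) (at 0)"
    by simp
  then show ?thesis
    by (rule has_field_derivative_transform_within_open[of _ _ _ "{t. s - 2 * c * t - t * t > 0}"])
       (use assms in \<open>auto intro!: open_Collect_less continuous_intros\<close>)
qed

lemma cutoff_has_real_derivative_line: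
  fixes z :: "'a::euclidean_space"
  assumes "b \<in> Basis" "norm z < r"
  shows "((\<lambda>t. cutoff \<alpha> r (z + t *\<^sub>R b)) has_real_derivative cutoff_partial \<alpha> r b z) (at 0)"
  using has_real_derivative_quadratic_powr[OF ball_defect_pos[OF assms(2)], of "z \<bullet> b" \<alpha>]
    ball_defect_pos[OF assms(2)]
  unfolding cutoff_def cutoff_partial_def ball_defect_add_scaleR_Basis[OF assms(1)]
  by (simp add: mult.assoc)

lemma cutoff_partial_has_real_derivative_line:
  fixes z :: "'a::euclidean_space"
  assumes b: "b \<in> Basis" and z: "norm z < r"
  shows "((\<lambda>t. cutoff_partial \<alpha> r b (z + t *\<^sub>R b)) has_real_derivative cutoff_partial2 \<alpha> r b z) (at 0)"
proof -
  have s: "ball_defect r z > 0" by (rule ball_defect_pos[OF z])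
  have "((\<lambda>t. -2 * \<alpha> * (z \<bullet> b + t)) has_real_derivative (-2 * \<alpha>)) (at 0)"
    by (auto intro!: derivative_eq_intros)
  from DERIV_mult[OF this has_real_derivative_quadratic_powr[OF s, of "z \<bullet> b" "\<alpha> - 1"]]
  show ?thesis
    unfolding cutoff_partial_def cutoff_partial2_def ball_defect_add_scaleR_Basis[OF b]
      inner_add_scaleR_Basis[OF b]
    by (rule DERIV_cong) (use s in \<open>simp add: power2_eq_square algebra_simps\<close>)
qed

lemma cutoff_nonneg: "0 \<le> cutoff \<alpha> r y"
  by (simp add: cutoff_def)

lemma cutoff_outside:
  "r \<le> norm y \<Longrightarrow> 0 \<le> r \<Longrightarrow> cutoff \<alpha> r y = 0 \<and> cutoff_partial \<alpha> r b y = 0"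
  using ball_defect_nonpos[of r y] by (simp add: cutoff_def cutoff_partial_def max_def)

lemma cutoff_le_1: "y \<in> ball 0 r \<Longrightarrow> r \<le> 1 \<Longrightarrow> 0 \<le> \<alpha> \<Longrightarrow> cutoff \<alpha> r y \<le> 1"
  using ball_defect_powr_le_1[of y r \<alpha>] ball_defect_pos[of y r] by (simp add: cutoff_def)

lemma cutoff_mono: "r \<le> r' \<Longrightarrow> 0 \<le> r \<Longrightarrow> 0 \<le> \<alpha> \<Longrightarrow> cutoff \<alpha> r y \<le> cutoff \<alpha> r' y"
  unfolding cutoff_def by (intro powr_mono2 max.mono order_refl ball_defect_mono) auto

lemma cutoff_le_weight:
  assumes "0 \<le> r" "r \<le> 1" "0 \<le> \<alpha>" "norm y < 1"
  shows "cutoff \<alpha> r y \<le> (1 - (norm y)\<^sup>2) powr \<alpha>"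
proof -
  have "(norm y)\<^sup>2 < 1" using assms(4) by (simp add: power_less_one_iff abs_less_iff)
  then show ?thesis
    unfolding cutoff_def using ball_defect_le[OF assms(1,2), of y] assms(3) by (intro powr_mono2) auto
qed

lemma tendsto_ball_defect_powr:
  assumes r: "(r \<longlongrightarrow> 1) F" and y: "norm y < 1"
  shows "((\<lambda>k. ball_defect (r k) y powr \<alpha>) \<longlongrightarrow> (1 - (norm y)\<^sup>2) powr \<alpha>) F"
proof -
  have "1 - (norm y)\<^sup>2 > 0" using y by (simp add: power_less_one_iff abs_less_iff)
  moreover have "((\<lambda>k. ball_defect (r k) y) \<longlongrightarrow> 1\<^sup>2 - (norm y)\<^sup>2) F"
    unfolding ball_defect_def by (intro tendsto_intros r)
  ultimately show ?thesis by (auto intro: tendsto_powr)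
qed

lemma tendsto_cutoff:
  assumes r: "(r \<longlongrightarrow> 1) F" and y: "norm y < 1"
  shows "((\<lambda>k. cutoff \<alpha> (r k) y) \<longlongrightarrow> (1 - (norm y)\<^sup>2) powr \<alpha>) F"
proof -
  have pos: "1 - (norm y)\<^sup>2 > 0" using y by (simp add: power_less_one_iff abs_less_iff)
  have "((\<lambda>k. max 0 (ball_defect (r k) y)) \<longlongrightarrow> max 0 (1\<^sup>2 - (norm y)\<^sup>2)) F"
    unfolding ball_defect_def by (intro tendsto_intros r)
  then have "((\<lambda>k. (max 0 (ball_defect (r k) y)) powr \<alpha>) \<longlongrightarrow> (max 0 (1\<^sup>2 - (norm y)\<^sup>2)) powr \<alpha>) F"
    using pos by (intro tendsto_powr tendsto_const) auto
  then show ?thesis using pos by (simp add: cutoff_def)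
qed

lemma continuous_on_cutoff: "0 < \<alpha> \<Longrightarrow> continuous_on S (cutoff \<alpha> r)"
  unfolding cutoff_def ball_defect_def by (intro continuous_on_powr' continuous_intros) auto

lemma continuous_on_cutoff_partial: "1 < \<alpha> \<Longrightarrow> continuous_on S (cutoff_partial \<alpha> r b)"
  unfolding cutoff_partial_def ball_defect_def by (intro continuous_on_powr' continuous_intros) auto

lemma continuous_on_ball_defect_powr: "continuous_on (ball 0 r) (\<lambda>y. ball_defect r y powr e)"
  using ball_defect_pos unfolding ball_defect_def
  by (intro continuous_on_powr continuous_intros) (force simp: ball_defect_def)

lemma continuous_on_cutoff_partial2: "continuous_on (ball 0 r) (cutoff_partial2 \<alpha> r b)"
  unfolding cutoff_partial2_def by (intro continuous_intros continuous_on_ball_defect_powr)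

lemma abs_cutoff_partial2_le:
  fixes y :: "'a::euclidean_space"
  assumes y: "y \<in> ball 0 r" and r: "r \<le> 1" and b: "b \<in> Basis" and \<alpha>: "\<alpha> \<ge> 2"
  shows "\<bar>cutoff_partial2 \<alpha> r b y\<bar> \<le> 2 * \<alpha> + 4 * \<alpha> * (\<alpha> - 1)"
proof -
  define e where "e = ball_defect r y powr (\<alpha> - 1)"
  define q where "q = (y \<bullet> b)\<^sup>2 * ball_defect r y powr (\<alpha> - 2)"
  have "\<bar>y \<bullet> b\<bar> \<le> 1" using Basis_le_norm[OF b, of y] y r by simp
  then have "(y \<bullet> b)\<^sup>2 \<le> 1" by (metis abs_ge_zero power2_abs power_le_one)
  then have e: "0 \<le> e" "e \<le> 1" and q: "0 \<le> q" "q \<le> 1"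
    using ball_defect_powr_le_1[OF y r, of "\<alpha> - 1"] ball_defect_powr_le_1[OF y r, of "\<alpha> - 2"] \<alpha>
    by (auto simp: e_def q_def intro!: mult_le_one)
  have "2 * \<alpha> * e \<le> 2 * \<alpha>" "4 * \<alpha> * (\<alpha> - 1) * q \<le> 4 * \<alpha> * (\<alpha> - 1)"
    using e q \<alpha> by (simp_all add: mult_left_le)
  moreover have "0 \<le> 2 * \<alpha> * e" "0 \<le> 4 * \<alpha> * (\<alpha> - 1) * q" using e q \<alpha> by auto
  moreover have "cutoff_partial2 \<alpha> r b y = - (2 * \<alpha> * e) + 4 * \<alpha> * (\<alpha> - 1) * q"
    by (simp add: cutoff_partial2_def e_def q_def algebra_simps)
  ultimately show ?thesis by linarith
qed

lemma sum_cutoff_partial2: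
  fixes y :: "'a::euclidean_space"
  shows "(\<Sum>b\<in>Basis. cutoff_partial2 \<alpha> r b y) = cutoff_laplacian \<alpha> r y"
proof -
  have "(\<Sum>b\<in>Basis. (y \<bullet> b)\<^sup>2) = (norm y)\<^sup>2"
    unfolding power2_norm_eq_inner euclidean_inner[of y y] by (simp add: power2_eq_square)
  moreover have "(\<Sum>b\<in>Basis. 4 * \<alpha> * (\<alpha> - 1) * (y \<bullet> b)\<^sup>2 * ball_defect r y powr (\<alpha> - 2))
      = 4 * \<alpha> * (\<alpha> - 1) * (\<Sum>b\<in>Basis. (y \<bullet> b)\<^sup>2) * ball_defect r y powr (\<alpha> - 2)"
    by (simp only: sum_distrib_right[symmetric] sum_distrib_left[symmetric])
  ultimately show ?thesis
    unfolding cutoff_partial2_def cutoff_laplacian_def sum.distrib by (simp add: algebra_simps)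
qed

lemma cutoff_laplacian_le:
  "\<alpha> \<ge> 0 \<Longrightarrow> cutoff_laplacian \<alpha> r y \<le> 4 * \<alpha> * (\<alpha> - 1) * (norm y)\<^sup>2 * ball_defect r y powr (\<alpha> - 2)"
  by (simp add: cutoff_laplacian_def)

lemma weight_le_cutoff_laplacian:
  fixes y :: "'a::euclidean_space"
  assumes y: "y \<in> ball 0 r" and r: "r \<le> 1" and \<alpha>: "\<alpha> \<ge> 2"
    and near: "max (1/2) (1 - 1 / (2 * DIM('a))) < (norm y)\<^sup>2"
  shows "\<alpha> * ball_defect r y powr (\<alpha> - 2) \<le> cutoff_laplacian \<alpha> r y"
proof -
  define s where "s = ball_defect r y"
  define N where "N = real DIM('a)"
  have s0: "0 < s" using ball_defect_pos y by (simp add: s_def)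
  have N1: "N \<ge> 1" using DIM_positive[where 'a='a] by (simp add: N_def)
  have "s \<le> 1 - (norm y)\<^sup>2"
    using ball_defect_le[OF _ r, of y] y unfolding s_def by (meson dual_order.trans mem_ball_0 norm_ge_zero less_imp_le)
  then have "s < 1 / (2 * N)" using near by (simp add: N_def)
  then have sN: "2 * N * s < 1" using N1 by (simp add: field_simps)
  have "(\<alpha> - 1) * (norm y)\<^sup>2 \<ge> 1 * (norm y)\<^sup>2" using \<alpha> by (intro mult_right_mono) auto
  then have bracket: "0 \<le> 4 * (\<alpha> - 1) * (norm y)\<^sup>2 - 2 * N * s - 1" using near sN by linarith
  have "s powr (\<alpha> - 1) = s powr ((\<alpha> - 2) + 1)" by simp
  also have "\<dots> = s powr (\<alpha> - 2) * s powr 1" by (rule powr_add)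
  finally have "s powr (\<alpha> - 1) = s * s powr (\<alpha> - 2)" using s0 by simp
  then have "cutoff_laplacian \<alpha> r y - \<alpha> * s powr (\<alpha> - 2)
      = (\<alpha> * s powr (\<alpha> - 2)) * (4 * (\<alpha> - 1) * (norm y)\<^sup>2 - 2 * N * s - 1)"
    by (simp add: cutoff_laplacian_def s_def[symmetric] N_def algebra_simps)
  also have "\<dots> \<ge> 0" using \<alpha> bracket by (intro mult_nonneg_nonneg) auto
  finally show ?thesis by (simp add: s_def)
qed

lemma cutoff_laplacian_ge:
  fixes y :: "'a::euclidean_space" and \<alpha> :: real
  assumes "y \<in> ball 0 r" "r \<le> 1" "\<alpha> \<ge> 2"
  shows "- 2 * \<alpha> * DIM('a) \<le> cutoff_laplacian \<alpha> r y"
proof -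
  have "2 * \<alpha> * DIM('a) * ball_defect r y powr (\<alpha> - 1) \<le> 2 * \<alpha> * DIM('a) * 1"
    using ball_defect_powr_le_1[OF assms(1,2), of "\<alpha> - 1"] assms(3) by (intro mult_left_mono) auto
  moreover have "0 \<le> 4 * \<alpha> * (\<alpha> - 1) * (norm y)\<^sup>2 * ball_defect r y powr (\<alpha> - 2)"
    using assms(3) by simp
  ultimately show ?thesis by (simp add: cutoff_laplacian_def)
qed

lemma weight_le_cutoff_laplacian_plus:
  fixes y :: "'a::euclidean_space" and \<alpha> :: real
  assumes y: "y \<in> ball 0 r" and r: "r \<le> 1" and \<alpha>: "\<alpha> \<ge> 2" and c: "0 \<le> c" "c \<le> M"
  shows "\<alpha> * ball_defect r y powr (\<alpha> - 2) * c \<le> c * cutoff_laplacian \<alpha> r y + (2 * DIM('a) + 1) * \<alpha> * M"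
proof -
  have "\<alpha> * (ball_defect r y powr (\<alpha> - 2) * c) \<le> \<alpha> * (1 * M)"
    using ball_defect_powr_le_1[OF y r, of "\<alpha> - 2"] \<alpha> c by (intro mult_left_mono mult_mono) auto
  moreover have "c * (- 2 * \<alpha> * DIM('a)) \<le> c * cutoff_laplacian \<alpha> r y"
    using cutoff_laplacian_ge[OF y r \<alpha>] c(1) by (rule mult_left_mono)
  moreover have "M * (- 2 * \<alpha> * DIM('a)) \<le> c * (- 2 * \<alpha> * DIM('a))"
    using c \<alpha> by (intro mult_right_mono_neg) auto
  ultimately show ?thesis by (simp add: algebra_simps)
qed

lemma ball_defect_le_twice:
  assumes "0 \<le> r" "r \<le> 1" "norm y < 1"
  shows "ball_defect r y \<le> 2 * (1 - norm y)"
proof -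
  have "ball_defect r y \<le> (1 - norm y) * (1 + norm y)"
    using ball_defect_le[OF assms(1,2), of y] by (simp add: power2_eq_square algebra_simps)
  also have "\<dots> \<le> (1 - norm y) * 2" using assms(3) by (intro mult_left_mono) auto
  finally show ?thesis by simp
qed

section \<open>Lebesgue integrals over balls\<close>

lemma sphere_in_null_sets_lborel: "sphere (c::'a::euclidean_space) r \<in> null_sets lborel"
  using negligible_sphere[of c r]
  by (auto simp: null_sets_completion_iff negligible_iff_null_sets negligible_convex_frontier)

lemma integrable_continuous_bounded_support:
  fixes g :: "'a::euclidean_space \<Rightarrow> real"
  assumes c: "continuous_on UNIV g" and z: "\<And>y. norm y > R \<Longrightarrow> g y = 0"
  shows "integrable lborel g"
proof -
  have "bounded (g ` cball 0 R)"
    by (intro compact_imp_bounded compact_continuous_image continuous_on_subset[OF c]) auto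
  then obtain M where M: "\<And>x. x \<in> g ` cball 0 R \<Longrightarrow> norm x \<le> M" by (auto simp: bounded_pos)
  have bound: "norm (g y) \<le> norm (M * indicator (cball 0 R) y)" for y
  proof (cases "norm y \<le> R")
    case True
    then show ?thesis using M[of "g y"] norm_ge_zero[of "g y"] by auto
  qed (use z[of y] in simp)
  have "integrable lborel (\<lambda>y. M * indicator (cball (0::'a) R) y)"
    by (intro integrable_mult_right integrable_real_indicator)
       (use emeasure_lborel_cball_finite[of "0::'a" R] in auto)
  moreover have "g \<in> borel_measurable lborel"
    using borel_measurable_continuous_onI[OF c] by simp
  ultimately show ?thesis by (rule Bochner_Integration.integrable_bound) (use bound in auto)
qed

lemma integral_lborel_translate:
  fixes g :: "'a::euclidean_space \<Rightarrow> real"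
  assumes "continuous_on UNIV g"
  shows "integral\<^sup>L lborel (\<lambda>y. g (y + c)) = integral\<^sup>L lborel g"
proof -
  have "g \<in> borel_measurable borel" using borel_measurable_continuous_onI[OF assms] .
  then have "integral\<^sup>L (distr lborel borel ((+) c)) g = integral\<^sup>L lborel (\<lambda>x. g (c + x))"
    by (intro integral_distr) auto
  then show ?thesis by (simp add: lborel_distr_plus add.commute)
qed

locale partial_derivative_off_sphere =
  fixes G g :: "'a::euclidean_space \<Rightarrow> real" and b :: 'a and r R M :: real
  assumes Basis: "b \<in> Basis"
    and continuous: "continuous_on UNIV G"
    and support: "\<And>y. R < norm y \<Longrightarrow> G y = 0"
    and measurable: "g \<in> borel_measurable lborel"
    and bounded: "\<And>y. \<bar>g y\<bar> \<le> M"
    and derivative: "\<And>y. norm y \<noteq> r \<Longrightarrow> ((\<lambda>t. G (y + t *\<^sub>R b)) has_real_derivative g y) (at 0)"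
begin

lemma derivative_at:
  assumes "norm (y + t0 *\<^sub>R b) \<noteq> r"
  shows "((\<lambda>t. G (y + t *\<^sub>R b)) has_real_derivative g (y + t0 *\<^sub>R b)) (at t0)"
proof -
  have "\<And>t. (y + t0 *\<^sub>R b) + t *\<^sub>R b = y + (t + t0) *\<^sub>R b" by (simp add: algebra_simps)
  with derivative[OF assms]
  have "((\<lambda>t. G (y + (t + t0) *\<^sub>R b)) has_real_derivative g (y + t0 *\<^sub>R b)) (at 0)" by simp
  then show ?thesis using DERIV_shift[of "\<lambda>t. G (y + t *\<^sub>R b)" _ 0 t0] by simp
qed

lemma lipschitz_along_line:
  assumes h: "h \<ge> 0"
  shows "\<bar>G (y + h *\<^sub>R b) - G y\<bar> \<le> M * h"
proof -
  let ?G = "\<lambda>t. G (y + t *\<^sub>R b)"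
  have "continuous_on {0..h} ?G"
    by (rule continuous_on_compose2[OF continuous]) (auto intro!: continuous_intros)
  moreover have "(?G has_vector_derivative g (y + t *\<^sub>R b)) (at t)"
    if "t \<in> {0<..<h} - {t. norm (y + t *\<^sub>R b) = r}" for t
    using derivative_at[of y t] that by (simp add: has_real_derivative_iff_has_vector_derivative)
  ultimately have "((\<lambda>t. g (y + t *\<^sub>R b)) has_integral (?G h - ?G 0)) {0..h}"
    by (intro fundamental_theorem_of_calculus_interior_strong[OF finite_sphere_inter_line[OF Basis] h])
  moreover have "0 \<le> M" using bounded[of y] by linarith
  ultimately have "norm (?G h - ?G 0) \<le> M * measure lborel (cbox 0 h)"
    using bounded by (intro has_integral_bound[of M]) (auto simp: cbox_interval)
  then show ?thesis using h by simp
qed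

lemma integrable_shift: "integrable lborel (\<lambda>y. G (y + c))"
proof (rule integrable_continuous_bounded_support[where R = "R + norm c"])
  show "continuous_on UNIV (\<lambda>y. G (y + c))"
    by (rule continuous_on_compose2[OF continuous]) (auto intro!: continuous_intros)
  fix y :: 'a assume "norm y > R + norm c"
  then show "G (y + c) = 0" using norm_triangle_ineq2[of y "-c"] by (intro support) simp
qed

definition diff_quotient :: "real \<Rightarrow> 'a \<Rightarrow> real" where
  "diff_quotient h y = (G (y + h *\<^sub>R b) - G y) / h"

lemma integral_diff_quotient: "integral\<^sup>L lborel (diff_quotient h) = 0"
proof -
  have "integral\<^sup>L lborel (diff_quotient h)
      = (integral\<^sup>L lborel (\<lambda>y. G (y + h *\<^sub>R b)) - integral\<^sup>L lborel (\<lambda>y. G (y + 0))) / h"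
    unfolding diff_quotient_def[abs_def] using integrable_shift[of 0] integrable_shift[of "h *\<^sub>R b"]
    by (simp add: Bochner_Integration.integral_diff)
  then show ?thesis by (simp only: integral_lborel_translate[OF continuous]) simp
qed

lemma diff_quotient_measurable: "diff_quotient h \<in> borel_measurable lborel"
  unfolding diff_quotient_def[abs_def] using integrable_shift[of 0] integrable_shift[of "h *\<^sub>R b"]
  by (auto intro!: borel_measurable_divide borel_measurable_diff)

lemma abs_diff_quotient_le:
  assumes h: "0 < h" "h \<le> 1"
  shows "\<bar>diff_quotient h y\<bar> \<le> M * indicator (cball 0 (R + 1)) y"
proof (cases "norm y \<le> R + 1")
  case True
  with lipschitz_along_line[of h y] h show ?thesis
    by (simp add: diff_quotient_def divide_le_eq abs_divide)
next
  case False
  moreover have "norm (y + h *\<^sub>R b) \<ge> norm y - h"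
    using norm_triangle_ineq2[of y "- h *\<^sub>R b"] Basis h by simp
  ultimately show ?thesis using h support[of y] support[of "y + h *\<^sub>R b"] by (simp add: diff_quotient_def)
qed

lemma diff_quotient_tendsto:
  assumes "norm y \<noteq> r" and "h \<longlonglongrightarrow> 0" and "\<And>k. h k \<noteq> 0"
  shows "(\<lambda>k. diff_quotient (h k) y) \<longlonglongrightarrow> g y"
proof -
  have "((\<lambda>t. (G (y + t *\<^sub>R b) - G y) / t) \<longlongrightarrow> g y) (at 0)"
    using derivative[OF assms(1)] unfolding DERIV_def by simp
  with assms(2,3) show ?thesis unfolding tendsto_at_iff_sequentially diff_quotient_def by (auto simp: o_def)
qed

text \<open>The difference quotients have integral zero by translation invariance, are dominated by a
  multiple of an indicator and converge to \<open>g\<close> off a null set; dominated convergence concludes.\<close>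

lemma integrable_and_integral_eq_0:
  shows "integrable lborel g" and "integral\<^sup>L lborel g = 0"
proof -
  define Q where "Q k = diff_quotient (inverse (real (Suc k)))" for k
  have measurable_Q: "Q k \<in> borel_measurable lborel" for k
    unfolding Q_def by (rule diff_quotient_measurable)
  have bound_Q: "AE y in lborel. norm (Q k y) \<le> M * indicator (cball 0 (R + 1)) y" for k
  proof (intro AE_I2)
    have "0 < inverse (real (Suc k))" "inverse (real (Suc k)) \<le> 1" by (auto simp: field_simps)
    then show "norm (Q k y) \<le> M * indicator (cball 0 (R + 1)) y" for y
      unfolding Q_def real_norm_def by (rule abs_diff_quotient_le)
  qed
  have lim_Q: "AE y in lborel. (\<lambda>k. Q k y) \<longlonglongrightarrow> g y"
    using AE_not_in[OF sphere_in_null_sets_lborel[of 0 r]]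
    unfolding Q_def by eventually_elim (intro diff_quotient_tendsto LIMSEQ_inverse_real_of_nat; simp)
  have integrable_bound: "integrable lborel (\<lambda>y. M * indicator (cball (0::'a) (R + 1)) y)"
    by (intro integrable_mult_right integrable_real_indicator)
       (use emeasure_lborel_cball_finite[of "0::'a" "R + 1"] in auto)
  show "integrable lborel g"
    by (rule integrable_dominated_convergence[OF measurable measurable_Q integrable_bound lim_Q bound_Q])
  from integral_dominated_convergence[OF measurable measurable_Q integrable_bound lim_Q bound_Q]
  show "integral\<^sup>L lborel g = 0" by (simp add: Q_def integral_diff_quotient LIMSEQ_const_iff)
qed

end

lemma borel_measurable_indicator_ball_times:
  fixes E :: "'a::euclidean_space \<Rightarrow> real"
  assumes "continuous_on (ball 0 r) E"
  shows "(\<lambda>y. indicator (ball 0 r) y * E y) \<in> borel_measurable lborel"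
  using borel_measurable_continuous_on_indicator[OF _ assms] by simp

lemma integrable_indicator_ball_times:
  fixes E :: "'a::euclidean_space \<Rightarrow> real"
  assumes "continuous_on (ball 0 r) E" and bound: "\<And>y. y \<in> ball 0 r \<Longrightarrow> \<bar>E y\<bar> \<le> M"
  shows "integrable lborel (\<lambda>y. indicator (ball 0 r) y * E y)"
proof -
  have "integrable lborel (\<lambda>y. M * indicator (cball (0::'a) r) y)"
    by (intro integrable_mult_right integrable_real_indicator)
       (use emeasure_lborel_cball_finite[of "0::'a" r] in auto)
  moreover have "norm (indicator (ball 0 r) y * E y) \<le> norm (M * indicator (cball (0::'a) r) y)" for y
    using bound[of y] by (cases "y \<in> ball 0 r") (auto simp: abs_le_iff)
  ultimately show ?thesis
    using Bochner_Integration.integrable_bound borel_measurable_indicator_ball_times[OF assms(1)]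
    by (metis (no_types, lifting) AE_I2)
qed

lemma bounded_on_smaller_cball:
  fixes g :: "'a::euclidean_space \<Rightarrow> real"
  assumes "continuous_on (ball 0 1) g" "r < 1"
  obtains M where "M \<ge> 0" "\<And>y. norm y \<le> r \<Longrightarrow> \<bar>g y\<bar> \<le> M"
proof -
  have "continuous_on (cball 0 r) g"
    by (rule continuous_on_subset[OF assms(1)]) (use assms in auto)
  then have "bounded (g ` cball 0 r)" by (intro compact_imp_bounded compact_continuous_image) auto
  then obtain M where "M > 0" "\<And>x. x \<in> g ` cball 0 r \<Longrightarrow> norm x \<le> M" by (auto simp: bounded_pos)
  then show ?thesis by (intro that[of M]) auto
qed

lemma nn_integral_le_of_incseq_tendsto:
  fixes g :: "nat \<Rightarrow> 'a \<Rightarrow> real"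
  assumes "\<And>k. g k \<in> borel_measurable M"
    and "\<And>x k. g k x \<le> g (Suc k) x"
    and "\<And>x. (\<lambda>k. g k x) \<longlonglongrightarrow> H x"
    and "\<And>k. (\<integral>\<^sup>+ x. ennreal (g k x) \<partial>M) \<le> K"
  shows "(\<integral>\<^sup>+ x. ennreal (H x) \<partial>M) \<le> K"
proof -
  have "(\<lambda>k. \<integral>\<^sup>+ x. ennreal (g k x) \<partial>M) \<longlonglongrightarrow> (\<integral>\<^sup>+ x. ennreal (H x) \<partial>M)"
    using assms(1-3)
    by (intro nn_integral_LIMSEQ incseq_SucI tendsto_ennrealI)
       (auto simp: le_fun_def intro: ennreal_leI)
  then show ?thesis by (rule LIMSEQ_le_const2) (use assms(4) in auto)
qed

definition radius_seq :: "nat \<Rightarrow> real" where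
  "radius_seq k = 1 - inverse (real k + 2)"

lemma radius_seq_pos: "0 < radius_seq k" and radius_seq_less_1: "radius_seq k < 1"
  and radius_seq_mono: "radius_seq k \<le> radius_seq (Suc k)"
  by (auto simp: radius_seq_def field_simps)

lemma radius_seq_tendsto_1: "radius_seq \<longlonglongrightarrow> 1"
proof -
  have "(\<lambda>k. inverse (real (Suc (Suc k)))) \<longlonglongrightarrow> 0"
    using LIMSEQ_inverse_real_of_nat by (rule LIMSEQ_Suc)
  then have "(\<lambda>k. 1 - inverse (real (Suc (Suc k)))) \<longlonglongrightarrow> 1 - 0" by (intro tendsto_intros)
  then show ?thesis unfolding radius_seq_def[abs_def] by (simp add: add.commute)
qed

lemma eventually_norm_less_radius:
  "norm y < 1 \<Longrightarrow> eventually (\<lambda>k. norm y < radius_seq k) sequentially"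
  using radius_seq_tendsto_1 by (rule order_tendstoD)

lemma nn_integral_dVN_finite_iff:
  fixes \<phi> \<psi> :: "'a::euclidean_space \<Rightarrow> real"
  assumes "\<psi> \<in> borel_measurable lborel"
    and "\<And>z. z \<in> ball 0 1 \<Longrightarrow> \<phi> z = \<psi> z" and "\<And>z. z \<notin> ball 0 1 \<Longrightarrow> \<psi> z = 0"
  shows "(\<integral>\<^sup>+ z. ennreal (\<phi> z) \<partial>dVN) < \<infinity> \<longleftrightarrow> (\<integral>\<^sup>+ z. ennreal (\<psi> z) \<partial>lborel) < \<infinity>"
proof -
  let ?B = "ball (0::'a) 1"
  have "(\<integral>\<^sup>+ z. ennreal (\<phi> z) \<partial>dVN) = (\<integral>\<^sup>+ z. ennreal (\<psi> z) \<partial>dVN)"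
    unfolding dVN_def by (intro nn_integral_cong_AE AE_uniform_measureI) (auto simp: assms(2))
  also have "\<dots> = (\<integral>\<^sup>+ z. ennreal (\<psi> z) * indicator ?B z \<partial>lborel) / emeasure lborel ?B"
    unfolding dVN_def by (rule nn_integral_uniform_measure) (use assms(1) in auto)
  also have "(\<integral>\<^sup>+ z. ennreal (\<psi> z) * indicator ?B z \<partial>lborel) = (\<integral>\<^sup>+ z. ennreal (\<psi> z) \<partial>lborel)"
    by (intro nn_integral_cong) (auto simp: indicator_def assms(3))
  finally have eq: "(\<integral>\<^sup>+ z. ennreal (\<phi> z) \<partial>dVN) = (\<integral>\<^sup>+ z. ennreal (\<psi> z) \<partial>lborel) / emeasure lborel ?B" .
  have "emeasure lborel ?B = ennreal (unit_ball_vol (real DIM('a)) * 1 ^ DIM('a))"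
    by (rule emeasure_ball) simp
  then have "emeasure lborel ?B = ennreal (unit_ball_vol (real DIM('a)))" by simp
  moreover have "0 < unit_ball_vol (real DIM('a))" by simp
  ultimately have "emeasure lborel ?B \<noteq> 0" by (simp only: ennreal_eq_0_iff not_le)
  moreover have "emeasure lborel ?B \<noteq> \<infinity>" using emeasure_lborel_ball_finite[of "0::'a" 1] by simp
  ultimately show ?thesis unfolding eq by (simp add: less_top[symmetric] ennreal_divide_eq_top_iff)
qed

section \<open>The Laplacian of \<open>|f|\<^sup>p\<close> and Green's identity\<close>

lemma has_real_derivative_along_line:
  assumes "(F has_derivative F') (at z)"
  shows "((\<lambda>t. F (z + t *\<^sub>R b)) has_real_derivative F' b) (at 0)"
proof -
  have "((\<lambda>t::real. z + t *\<^sub>R b) has_derivative (\<lambda>t. t *\<^sub>R b)) (at 0)"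
    by (auto intro!: derivative_eq_intros)
  from has_derivative_compose[OF this, of F] assms
  have "((\<lambda>t. F (z + t *\<^sub>R b)) has_derivative (\<lambda>t. F' (t *\<^sub>R b))) (at 0)" by simp
  moreover have "F' (t *\<^sub>R b) = t * F' b" for t
    using linear_scale[OF has_derivative_linear[OF assms]] by simp
  ultimately show ?thesis by (simp add: has_field_derivative_def mult_commute_abs)
qed

lemma partial_dir_eq:
  "(F has_derivative F') (at z) \<Longrightarrow> partial_dir F b z = F' b"
  unfolding partial_dir_def by (simp add: frechet_derivative_at[symmetric])

lemma partial_dir_eq_on_open:
  assumes "(H has_derivative H') (at z)" "open S" "z \<in> S" "\<And>y. y \<in> S \<Longrightarrow> F y = H y"
  shows "partial_dir F b z = H' b"
  using partial_dir_eq has_derivative_transform_within_open[OF assms(1-3)] assms(4) by metis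

locale norm_powr_of_C2 =
  fixes f :: "complex^'n \<Rightarrow> complex" and p :: real
  assumes C2: "C2_on (ball 0 1) f" and p: "p \<ge> 2"
begin

definition u :: "complex^'n \<Rightarrow> real" where
  "u w = norm (f w) powr p"

definition du :: "complex^'n \<Rightarrow> complex^'n \<Rightarrow> real" where
  "du b y = norm_powr_deriv p (f y) (partial_dir f b y)"

definition d2u :: "complex^'n \<Rightarrow> complex^'n \<Rightarrow> real" where
  "d2u b y = norm_powr_deriv2 p (f y) (partial_dir f b y) (partial_dir f b y)
     (partial_dir (partial_dir f b) b y)"

definition lap_u :: "complex^'n \<Rightarrow> real" where
  "lap_u y = (\<Sum>b\<in>Basis. d2u b y)"

lemma u_nonneg: "0 \<le> u y"
  by (simp add: u_def)

lemma f_has_derivative: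
  "y \<in> ball 0 1 \<Longrightarrow> (f has_derivative frechet_derivative f (at y)) (at y)"
  using C2 unfolding C2_on_def
  by (meson differentiable_on_eq_differentiable_at frechet_derivative_works open_ball)

lemma partial_has_derivative:
  "b \<in> Basis \<Longrightarrow> y \<in> ball 0 1 \<Longrightarrow>
     (partial_dir f b has_derivative frechet_derivative (partial_dir f b) (at y)) (at y)"
  using C2 unfolding C2_on_def
  by (metis differentiable_on_eq_differentiable_at frechet_derivative_works open_ball)

lemma continuous_on_f: "continuous_on (ball 0 1) f"
  using C2 unfolding C2_on_def by (simp add: differentiable_imp_continuous_on)

lemma continuous_on_partial: "b \<in> Basis \<Longrightarrow> continuous_on (ball 0 1) (partial_dir f b)"
  using C2 unfolding C2_on_def by (metis differentiable_imp_continuous_on)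

lemma continuous_on_partial2:
  "b \<in> Basis \<Longrightarrow> continuous_on (ball 0 1) (partial_dir (partial_dir f b) b)"
  using C2 unfolding C2_on_def by (metis (no_types))

lemma u_has_derivative:
  "y \<in> ball 0 1 \<Longrightarrow> (u has_derivative (\<lambda>v. norm_powr_deriv p (f y) (frechet_derivative f (at y) v))) (at y)"
  unfolding u_def using has_derivative_compose[OF f_has_derivative has_derivative_norm_powr[OF p]] by simp

lemma du_has_derivative:
  assumes "b \<in> Basis" "y \<in> ball 0 1"
  shows "(du b has_derivative (\<lambda>v. norm_powr_deriv2 p (f y) (partial_dir f b y)
           (frechet_derivative f (at y) v) (frechet_derivative (partial_dir f b) (at y) v))) (at y)"
proof -
  have "((\<lambda>y. (f y, partial_dir f b y)) has_derivative
      (\<lambda>v. (frechet_derivative f (at y) v, frechet_derivative (partial_dir f b) (at y) v))) (at y)"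
    by (intro has_derivative_Pair f_has_derivative partial_has_derivative assms)
  from has_derivative_compose[OF this has_derivative_norm_powr_deriv[OF p]]
  show ?thesis by (simp add: du_def[abs_def])
qed

lemma partial_dir_u: "y \<in> ball 0 1 \<Longrightarrow> partial_dir u b y = du b y"
  using partial_dir_eq[OF u_has_derivative] by (simp add: du_def partial_dir_def)

lemma partial_dir_du: "b \<in> Basis \<Longrightarrow> y \<in> ball 0 1 \<Longrightarrow> partial_dir (du b) b y = d2u b y"
  using partial_dir_eq[OF du_has_derivative] by (simp add: d2u_def partial_dir_def)

lemma u_has_real_derivative_line:
  "y \<in> ball 0 1 \<Longrightarrow> ((\<lambda>t. u (y + t *\<^sub>R b)) has_real_derivative du b y) (at 0)"
  using has_real_derivative_along_line[OF u_has_derivative] partial_dir_u partial_dir_eq[OF u_has_derivative]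
  by metis

lemma du_has_real_derivative_line:
  "b \<in> Basis \<Longrightarrow> y \<in> ball 0 1 \<Longrightarrow> ((\<lambda>t. du b (y + t *\<^sub>R b)) has_real_derivative d2u b y) (at 0)"
  using has_real_derivative_along_line[OF du_has_derivative] partial_dir_du partial_dir_eq[OF du_has_derivative]
  by metis

lemma laplacian_norm_powr_eq:
  assumes y: "y \<in> ball 0 1"
  shows "laplacian (\<lambda>w. norm (f w) powr p) y = lap_u y"
proof -
  have "partial_dir (partial_dir u b) b y = d2u b y" if b: "b \<in> Basis" for b
  proof -
    have "partial_dir (partial_dir u b) b y = partial_dir (du b) b y"
      using partial_dir_eq_on_open[OF du_has_derivative[OF b y] open_ball y, of "partial_dir u b" b]
        partial_dir_eq[OF du_has_derivative[OF b y], of b] partial_dir_u by simp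
    then show ?thesis using partial_dir_du[OF b y] by simp
  qed
  then show ?thesis
    by (simp add: laplacian_def lap_u_def u_def[abs_def])
qed

lemma lap_u_nonneg:
  assumes hyp: "Re (f y * cnj (laplacian f y)) \<ge> 0"
  shows "lap_u y \<ge> 0"
proof -
  have "lap_u y = p * norm_powr_weight p (f y) * (\<Sum>b\<in>Basis. Re (cnj (partial_dir f b y) * partial_dir f b y))
      + p * norm_powr_weight p (f y) * Re (cnj (f y) * laplacian f y)
      + p * (\<Sum>b\<in>Basis. norm_powr_cross p (f y) (partial_dir f b y) (partial_dir f b y))"
    by (simp add: lap_u_def d2u_def norm_powr_deriv2_def laplacian_def sum.distrib sum_distrib_left
        algebra_simps Re_sum[symmetric])
  moreover have "Re (cnj (f y) * laplacian f y) = Re (f y * cnj (laplacian f y))"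
    by (simp add: algebra_simps)
  moreover have "(\<Sum>b\<in>Basis. Re (cnj (partial_dir f b y) * partial_dir f b y)) \<ge> 0"
    by (intro sum_nonneg) (simp add: Re_cnj_mult_eq_inner)
  moreover have "(\<Sum>b\<in>Basis. norm_powr_cross p (f y) (partial_dir f b y) (partial_dir f b y)) \<ge> 0"
    by (intro sum_nonneg norm_powr_cross_diag_nonneg p)
  ultimately show ?thesis
    using hyp p norm_powr_weight_nonneg[of p "f y"] by simp
qed

lemma continuous_on_u: "continuous_on (ball 0 1) u"
  unfolding u_def[abs_def] using p by (intro continuous_on_powr' continuous_intros continuous_on_f) auto

lemma continuous_on_du: "b \<in> Basis \<Longrightarrow> continuous_on (ball 0 1) (du b)"
  unfolding du_def[abs_def]
  by (intro continuous_on_norm_powr_deriv p continuous_on_f continuous_on_partial)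

lemma continuous_on_d2u: "b \<in> Basis \<Longrightarrow> continuous_on (ball 0 1) (d2u b)"
  unfolding d2u_def[abs_def]
  by (intro continuous_on_norm_powr_deriv2 p continuous_on_f continuous_on_partial continuous_on_partial2)

lemma continuous_on_lap_u: "continuous_on (ball 0 1) lap_u"
  unfolding lap_u_def[abs_def] by (intro continuous_on_sum continuous_on_d2u)

definition flux :: "real \<Rightarrow> real \<Rightarrow> complex^'n \<Rightarrow> complex^'n \<Rightarrow> real" where
  "flux \<alpha> r b y = cutoff \<alpha> r y * du b y - u y * cutoff_partial \<alpha> r b y"

definition flux_deriv :: "real \<Rightarrow> real \<Rightarrow> complex^'n \<Rightarrow> complex^'n \<Rightarrow> real" where
  "flux_deriv \<alpha> r b y = indicator (ball 0 r) y * (cutoff \<alpha> r y * d2u b y - u y * cutoff_partial2 \<alpha> r b y)"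

lemma flux_outside: "r \<le> norm y \<Longrightarrow> 0 \<le> r \<Longrightarrow> flux \<alpha> r b y = 0"
  using cutoff_outside[of r y \<alpha> b] by (simp add: flux_def)

lemma flux_has_real_derivative_line:
  assumes b: "b \<in> Basis" and r: "0 \<le> r" "r \<le> 1" and y: "norm y \<noteq> r"
  shows "((\<lambda>t. flux \<alpha> r b (y + t *\<^sub>R b)) has_real_derivative flux_deriv \<alpha> r b y) (at 0)"
proof (cases "norm y < r")
  case True
  then have "y \<in> ball 0 1" using r by simp
  have "((\<lambda>t. cutoff \<alpha> r (y + t *\<^sub>R b) * du b (y + t *\<^sub>R b) - u (y + t *\<^sub>R b) * cutoff_partial \<alpha> r b (y + t *\<^sub>R b))
      has_real_derivative (cutoff \<alpha> r (y + 0 *\<^sub>R b) * d2u b y + cutoff_partial \<alpha> r b y * du b (y + 0 *\<^sub>R b)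
         - (u (y + 0 *\<^sub>R b) * cutoff_partial2 \<alpha> r b y + du b y * cutoff_partial \<alpha> r b (y + 0 *\<^sub>R b)))) (at 0)"
    by (intro DERIV_diff DERIV_mult' cutoff_has_real_derivative_line cutoff_partial_has_real_derivative_line
        du_has_real_derivative_line u_has_real_derivative_line b True \<open>y \<in> ball 0 1\<close>)
  then show ?thesis using True by (simp add: flux_def[abs_def] flux_deriv_def algebra_simps)
next
  case False
  with y have y: "norm y > r" by simp
  have "((\<lambda>t. 0::real) has_real_derivative 0) (at 0)" by simp
  moreover have "open {t::real. r < norm (y + t *\<^sub>R b)}" by (intro open_Collect_less continuous_intros)
  ultimately have "((\<lambda>t. flux \<alpha> r b (y + t *\<^sub>R b)) has_real_derivative 0) (at 0)"
    by (rule has_field_derivative_transform_within_open) (use y r flux_outside in auto)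
  then show ?thesis using y by (simp add: flux_deriv_def)
qed

lemma continuous_on_flux:
  assumes b: "b \<in> Basis" and r: "0 \<le> r" "r < 1" and \<alpha>: "\<alpha> \<ge> 2"
  shows "continuous_on UNIV (flux \<alpha> r b)"
proof -
  have "continuous_on (ball 0 1) (flux \<alpha> r b)"
    unfolding flux_def[abs_def] using \<alpha>
    by (intro continuous_intros continuous_on_du continuous_on_u b continuous_on_cutoff
        continuous_on_cutoff_partial) auto
  moreover have "continuous_on {y. norm y > r} (flux \<alpha> r b)"
    by (rule continuous_on_eq[OF continuous_on_const[of _ 0]]) (use flux_outside r in auto)
  ultimately have "continuous_on (ball 0 1 \<union> {y. norm y > r}) (flux \<alpha> r b)"
    by (intro continuous_on_open_Un open_ball open_Collect_less continuous_intros)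
  moreover have "ball 0 1 \<union> {y. norm y > r} = UNIV" using r by auto
  ultimately show ?thesis by metis
qed

lemma flux_deriv_measurable:
  assumes b: "b \<in> Basis" and r: "r < 1" and \<alpha>: "\<alpha> \<ge> 2"
  shows "flux_deriv \<alpha> r b \<in> borel_measurable lborel"
proof -
  have "ball 0 r \<subseteq> ball (0::complex^'n) 1" using r by auto
  then have "continuous_on (ball 0 r) (\<lambda>y. cutoff \<alpha> r y * d2u b y - u y * cutoff_partial2 \<alpha> r b y)"
    using \<alpha> by (intro continuous_intros continuous_on_subset[OF continuous_on_d2u[OF b]]
        continuous_on_subset[OF continuous_on_u] continuous_on_cutoff continuous_on_cutoff_partial2) auto
  from borel_measurable_indicator_ball_times[OF this] show ?thesis
    unfolding flux_deriv_def[abs_def] .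
qed

lemma flux_deriv_bounded:
  assumes b: "b \<in> Basis" and r: "r < 1" and \<alpha>: "\<alpha> \<ge> 2"
  obtains M where "\<And>y. \<bar>flux_deriv \<alpha> r b y\<bar> \<le> M"
proof -
  obtain M2 where M2: "M2 \<ge> 0" "\<And>y. norm y \<le> r \<Longrightarrow> \<bar>d2u b y\<bar> \<le> M2"
    using bounded_on_smaller_cball[OF continuous_on_d2u[OF b] r] by blast
  obtain M0 where M0: "M0 \<ge> 0" "\<And>y. norm y \<le> r \<Longrightarrow> \<bar>u y\<bar> \<le> M0"
    using bounded_on_smaller_cball[OF continuous_on_u r] by blast
  have "\<bar>flux_deriv \<alpha> r b y\<bar> \<le> 1 * M2 + M0 * (2 * \<alpha> + 4 * \<alpha> * (\<alpha> - 1))" for y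
  proof (cases "y \<in> ball 0 r")
    case True
    have "\<bar>cutoff \<alpha> r y * d2u b y\<bar> \<le> 1 * M2"
      unfolding abs_mult using True r \<alpha> M2 cutoff_le_1[of y r \<alpha>] cutoff_nonneg[of \<alpha> r y]
      by (intro mult_mono) auto
    moreover have "\<bar>u y * cutoff_partial2 \<alpha> r b y\<bar> \<le> M0 * (2 * \<alpha> + 4 * \<alpha> * (\<alpha> - 1))"
      unfolding abs_mult using True r M0 abs_cutoff_partial2_le[OF True _ b \<alpha>] by (intro mult_mono) auto
    ultimately show ?thesis using True by (simp add: flux_deriv_def)
  qed (use M0 M2 \<alpha> in \<open>simp add: flux_deriv_def\<close>)
  then show ?thesis by (rule that)
qed

lemma integral_flux_deriv_eq_0:
  assumes b: "b \<in> Basis" and r: "0 \<le> r" "r < 1" and \<alpha>: "\<alpha> \<ge> 2"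
  shows "integrable lborel (flux_deriv \<alpha> r b)" and "integral\<^sup>L lborel (flux_deriv \<alpha> r b) = 0"
proof -
  obtain M where M: "\<And>y. \<bar>flux_deriv \<alpha> r b y\<bar> \<le> M"
    using flux_deriv_bounded[OF b r(2) \<alpha>] by blast
  interpret partial_derivative_off_sphere "flux \<alpha> r b" "flux_deriv \<alpha> r b" b r r M
    by unfold_locales
       (use b r \<alpha> M flux_deriv_measurable[OF b r(2) \<alpha>] in
         \<open>auto intro: continuous_on_flux flux_outside flux_has_real_derivative_line\<close>)
  show "integrable lborel (flux_deriv \<alpha> r b)" "integral\<^sup>L lborel (flux_deriv \<alpha> r b) = 0"
    by (fact integrable_and_integral_eq_0)+
qed

lemma green_identity:
  assumes r: "0 \<le> r" "r < 1" and \<alpha>: "\<alpha> \<ge> 2"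
  shows "integrable lborel (\<lambda>y. indicator (ball 0 r) y * (cutoff \<alpha> r y * lap_u y))"
    and "integrable lborel (\<lambda>y. indicator (ball 0 r) y * (u y * cutoff_laplacian \<alpha> r y))"
    and "integral\<^sup>L lborel (\<lambda>y. indicator (ball 0 r) y * (cutoff \<alpha> r y * lap_u y))
       = integral\<^sup>L lborel (\<lambda>y. indicator (ball 0 r) y * (u y * cutoff_laplacian \<alpha> r y))"
proof -
  have sub: "ball 0 r \<subseteq> ball (0::complex^'n) 1" using r by auto
  obtain M where M: "M \<ge> 0" "\<And>y. norm y \<le> r \<Longrightarrow> \<bar>lap_u y\<bar> \<le> M"
    using bounded_on_smaller_cball[OF continuous_on_lap_u r(2)] by blast
  show int_lap: "integrable lborel (\<lambda>y. indicator (ball 0 r) y * (cutoff \<alpha> r y * lap_u y))"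
  proof (rule integrable_indicator_ball_times)
    show "continuous_on (ball 0 r) (\<lambda>y. cutoff \<alpha> r y * lap_u y)"
      using \<alpha> by (intro continuous_intros continuous_on_cutoff continuous_on_subset[OF continuous_on_lap_u sub]) auto
    fix y :: "complex^'n" assume y: "y \<in> ball 0 r"
    show "\<bar>cutoff \<alpha> r y * lap_u y\<bar> \<le> 1 * M"
      unfolding abs_mult using cutoff_le_1[OF y] cutoff_nonneg[of \<alpha> r y] M y r \<alpha>
      by (intro mult_mono) auto
  qed
  have sum_flux_deriv: "(\<lambda>y. indicator (ball 0 r) y * (cutoff \<alpha> r y * lap_u y)
        - indicator (ball 0 r) y * (u y * cutoff_laplacian \<alpha> r y)) = (\<lambda>y. \<Sum>b\<in>Basis. flux_deriv \<alpha> r b y)"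
    by (simp add: fun_eq_iff flux_deriv_def lap_u_def sum_cutoff_partial2[symmetric] sum_subtractf
        sum_distrib_left right_diff_distrib)
  have diff: "integrable lborel (\<lambda>y. indicator (ball 0 r) y * (cutoff \<alpha> r y * lap_u y)
        - indicator (ball 0 r) y * (u y * cutoff_laplacian \<alpha> r y))"
    unfolding sum_flux_deriv by (intro Bochner_Integration.integrable_sum integral_flux_deriv_eq_0[OF _ r \<alpha>])
  have diff_0: "integral\<^sup>L lborel (\<lambda>y. indicator (ball 0 r) y * (cutoff \<alpha> r y * lap_u y)
        - indicator (ball 0 r) y * (u y * cutoff_laplacian \<alpha> r y)) = 0"
    unfolding sum_flux_deriv
    by (simp add: Bochner_Integration.integral_sum integral_flux_deriv_eq_0[OF _ r \<alpha>])
  show int_u: "integrable lborel (\<lambda>y. indicator (ball 0 r) y * (u y * cutoff_laplacian \<alpha> r y))"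
    using Bochner_Integration.integrable_diff[OF int_lap diff] by simp
  show "integral\<^sup>L lborel (\<lambda>y. indicator (ball 0 r) y * (cutoff \<alpha> r y * lap_u y))
      = integral\<^sup>L lborel (\<lambda>y. indicator (ball 0 r) y * (u y * cutoff_laplacian \<alpha> r y))"
    using diff_0 Bochner_Integration.integral_diff[OF int_lap int_u] by simp
qed

lemma u_cutoff_laplacian_le:
  assumes y: "y \<in> ball 0 r" and r: "r \<le> 1" and \<alpha>: "\<alpha> \<ge> 2"
  shows "u y * cutoff_laplacian \<alpha> r y \<le> 4 * \<alpha> * (\<alpha> - 1) * 2 powr (\<alpha> - 2) * ((1 - norm y) powr (\<alpha> - 2) * u y)"
proof -
  have "norm y < r" using y by simp
  then have r0: "0 \<le> r" and ny: "norm y < 1" using r norm_ge_zero[of y] by linarith+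
  have "ball_defect r y powr (\<alpha> - 2) \<le> (2 * (1 - norm y)) powr (\<alpha> - 2)"
    using ball_defect_pos[of y r] ball_defect_le_twice[OF r0 r ny] y \<alpha> by (intro powr_mono2) auto
  also have "\<dots> = 2 powr (\<alpha> - 2) * (1 - norm y) powr (\<alpha> - 2)"
    using ny by (intro powr_mult)
  finally have defect: "ball_defect r y powr (\<alpha> - 2) \<le> 2 powr (\<alpha> - 2) * (1 - norm y) powr (\<alpha> - 2)" .
  have "(norm y)\<^sup>2 \<le> 1" using power2_norm_less_1[OF ny] by simp
  then have "4 * \<alpha> * (\<alpha> - 1) * (norm y)\<^sup>2 * ball_defect r y powr (\<alpha> - 2)
      \<le> 4 * \<alpha> * (\<alpha> - 1) * 1 * (2 powr (\<alpha> - 2) * (1 - norm y) powr (\<alpha> - 2))"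
    using \<alpha> defect by (intro mult_mono) auto
  then have "cutoff_laplacian \<alpha> r y \<le> 4 * \<alpha> * (\<alpha> - 1) * 1 * (2 powr (\<alpha> - 2) * (1 - norm y) powr (\<alpha> - 2))"
    using cutoff_laplacian_le[of \<alpha> r y] \<alpha> by linarith
  then have "u y * cutoff_laplacian \<alpha> r y
      \<le> u y * (4 * \<alpha> * (\<alpha> - 1) * 1 * (2 powr (\<alpha> - 2) * (1 - norm y) powr (\<alpha> - 2)))"
    using u_nonneg by (rule mult_left_mono)
  then show ?thesis by (simp add: mult_ac)
qed

lemma integrable_ball_times_u:
  assumes r: "r < 1" and E: "continuous_on (ball 0 r) E" and bound: "\<And>y. y \<in> ball 0 r \<Longrightarrow> \<bar>E y\<bar> \<le> K"
  shows "integrable lborel (\<lambda>y. indicator (ball 0 r) y * (E y * u y))"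
proof -
  have sub: "ball 0 r \<subseteq> ball (0::complex^'n) 1" using r by auto
  obtain M where M: "\<And>y. norm y \<le> r \<Longrightarrow> \<bar>u y\<bar> \<le> M"
    using bounded_on_smaller_cball[OF continuous_on_u r] by blast
  show ?thesis
  proof (rule integrable_indicator_ball_times)
    show "continuous_on (ball 0 r) (\<lambda>y. E y * u y)"
      by (intro continuous_intros E continuous_on_subset[OF continuous_on_u sub])
    show "\<bar>E y * u y\<bar> \<le> K * M" if "y \<in> ball 0 r" for y
      unfolding abs_mult using bound[OF that] M[of y] that by (intro mult_mono) auto
  qed
qed

lemma weight_u_le_cutoff_laplacian:
  assumes \<alpha>: "\<alpha> \<ge> 2"
  obtains K \<rho> where "0 \<le> K"
    "\<And>r y. r \<le> 1 \<Longrightarrow> y \<in> ball 0 r \<Longrightarrow>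
       \<alpha> * ball_defect r y powr (\<alpha> - 2) * u y \<le> u y * cutoff_laplacian \<alpha> r y + K * indicator (cball 0 \<rho>) y"
proof -
  define \<rho> where "\<rho> = sqrt (max (1/2) (1 - 1 / (2 * DIM(complex^'n))))"
  have \<rho>: "\<rho> < 1" "0 \<le> \<rho>" by (auto simp: \<rho>_def max_def)
  obtain M where M: "M \<ge> 0" "\<And>y. norm y \<le> \<rho> \<Longrightarrow> \<bar>u y\<bar> \<le> M"
    using bounded_on_smaller_cball[OF continuous_on_u \<rho>(1)] by blast
  \<comment> \<open>outside \<open>cball 0 \<rho>\<close> the Laplacian of the cutoff dominates; inside, \<open>u\<close> is bounded\<close>
  show ?thesis
  proof (rule that)
    show "0 \<le> (2 * real DIM(complex^'n) + 1) * \<alpha> * M" using \<alpha> M by simp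
    fix r and y :: "complex^'n"
    assume r: "r \<le> 1" and y: "y \<in> ball 0 r"
    show "\<alpha> * ball_defect r y powr (\<alpha> - 2) * u y
        \<le> u y * cutoff_laplacian \<alpha> r y + (2 * real DIM(complex^'n) + 1) * \<alpha> * M * indicator (cball 0 \<rho>) y"
    proof (cases "norm y \<le> \<rho>")
      case True
      then show ?thesis
        using weight_le_cutoff_laplacian_plus[OF y r \<alpha> u_nonneg M(2)[OF True, unfolded abs_of_nonneg[OF u_nonneg]]]
        by (simp add: add.commute)
    next
      case False
      then have "\<rho>\<^sup>2 < (norm y)\<^sup>2" using \<rho> by (intro power_strict_mono) auto
      then have "max (1/2) (1 - 1 / (2 * DIM(complex^'n))) < (norm y)\<^sup>2" by (simp add: \<rho>_def)
      from weight_le_cutoff_laplacian[OF y r \<alpha> this]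
      have "u y * (\<alpha> * ball_defect r y powr (\<alpha> - 2)) \<le> u y * cutoff_laplacian \<alpha> r y"
        using u_nonneg by (rule mult_left_mono)
      moreover have "0 \<le> (2 * real DIM(complex^'n) + 1) * \<alpha> * M * indicator (cball 0 \<rho>) y" using \<alpha> M by simp
      ultimately show ?thesis by (simp add: algebra_simps)
    qed
  qed
qed

end

section \<open>Comparison of the two weighted integrals\<close>

locale norm_powr_of_C2_Re_nonneg = norm_powr_of_C2 f p for f :: "complex^'n \<Rightarrow> complex" and p +
  assumes Re_nonneg: "\<forall>z\<in>ball 0 1. Re (f z * cnj (laplacian f z)) \<ge> 0"
begin

lemma lap_u_nonneg_on_ball: "y \<in> ball 0 1 \<Longrightarrow> 0 \<le> lap_u y"
  using Re_nonneg lap_u_nonneg by blast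

lemma cutoff_lap_u_nonneg: "r \<le> 1 \<Longrightarrow> 0 \<le> indicator (ball 0 r) y * (cutoff \<alpha> r y * lap_u y)"
  using lap_u_nonneg_on_ball[of y] cutoff_nonneg[of \<alpha> r y] by (cases "y \<in> ball 0 r") auto

definition weighted_lap :: "real \<Rightarrow> complex^'n \<Rightarrow> real" where
  "weighted_lap \<alpha> y = indicator (ball 0 1) y * ((1 - (norm y)\<^sup>2) powr \<alpha> * lap_u y)"

definition weighted_u :: "real \<Rightarrow> complex^'n \<Rightarrow> real" where
  "weighted_u \<alpha> y = indicator (ball 0 1) y * ((1 - norm y) powr (\<alpha> - 2) * u y)"

lemma weighted_lap_measurable: "\<alpha> > 0 \<Longrightarrow> weighted_lap \<alpha> \<in> borel_measurable lborel"
  unfolding weighted_lap_def[abs_def]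
  by (intro borel_measurable_indicator_ball_times continuous_intros continuous_on_powr'
      continuous_on_lap_u) (use power2_norm_less_1 in force)+

lemma weighted_u_measurable: "weighted_u \<alpha> \<in> borel_measurable lborel"
  unfolding weighted_u_def[abs_def]
  by (intro borel_measurable_indicator_ball_times continuous_intros continuous_on_powr continuous_on_u) auto

lemma cutoff_lap_u_le_weighted_lap:
  assumes "0 \<le> r" "r \<le> 1" "\<alpha> \<ge> 0"
  shows "indicator (ball 0 r) y * (cutoff \<alpha> r y * lap_u y) \<le> weighted_lap \<alpha> y"
proof (cases "y \<in> ball 0 r")
  case True
  then have y: "y \<in> ball 0 1" using assms by auto
  have "cutoff \<alpha> r y * lap_u y \<le> (1 - (norm y)\<^sup>2) powr \<alpha> * lap_u y"
    using assms y cutoff_le_weight[of r \<alpha> y] lap_u_nonneg_on_ball[OF y] by (intro mult_right_mono) auto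
  then show ?thesis using True y by (simp add: weighted_lap_def)
qed (use lap_u_nonneg_on_ball[of y] in \<open>simp add: weighted_lap_def indicator_def\<close>)

lemma nn_integral_cutoff_lap_u_eq:
  assumes r: "0 \<le> r" "r < 1" and \<alpha>: "\<alpha> \<ge> 2"
  shows "(\<integral>\<^sup>+ y. ennreal (indicator (ball 0 r) y * (cutoff \<alpha> r y * lap_u y)) \<partial>lborel)
      = ennreal (integral\<^sup>L lborel (\<lambda>y. indicator (ball 0 r) y * (u y * cutoff_laplacian \<alpha> r y)))"
    and "0 \<le> integral\<^sup>L lborel (\<lambda>y. indicator (ball 0 r) y * (u y * cutoff_laplacian \<alpha> r y))"
proof -
  have "AE y in lborel. 0 \<le> indicator (ball 0 r) y * (cutoff \<alpha> r y * lap_u y)"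
    using cutoff_lap_u_nonneg r by simp
  with green_identity[OF r \<alpha>]
  show "(\<integral>\<^sup>+ y. ennreal (indicator (ball 0 r) y * (cutoff \<alpha> r y * lap_u y)) \<partial>lborel)
      = ennreal (integral\<^sup>L lborel (\<lambda>y. indicator (ball 0 r) y * (u y * cutoff_laplacian \<alpha> r y)))"
    by (simp add: nn_integral_eq_integral)
  show "0 \<le> integral\<^sup>L lborel (\<lambda>y. indicator (ball 0 r) y * (u y * cutoff_laplacian \<alpha> r y))"
    unfolding green_identity(3)[OF r \<alpha>, symmetric] using cutoff_lap_u_nonneg r
    by (intro Bochner_Integration.integral_nonneg) auto
qed

lemma nn_integral_cutoff_lap_u_le:
  assumes r: "0 < r" "r < 1" and \<alpha>: "\<alpha> \<ge> 2"
  defines "c \<equiv> 4 * \<alpha> * (\<alpha> - 1) * 2 powr (\<alpha> - 2)"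
  shows "(\<integral>\<^sup>+ y. ennreal (indicator (ball 0 r) y * (cutoff \<alpha> r y * lap_u y)) \<partial>lborel)
    \<le> ennreal c * (\<integral>\<^sup>+ y. ennreal (weighted_u \<alpha> y) \<partial>lborel)"
proof -
  have c: "c \<ge> 0" using \<alpha> by (simp add: c_def)
  define P where "P y = indicator (ball 0 r) y * ((c * (1 - norm y) powr (\<alpha> - 2)) * u y)" for y
  have integrable_P: "integrable lborel P" unfolding P_def[abs_def]
  proof (rule integrable_ball_times_u[OF r(2)])
    show "continuous_on (ball 0 r) (\<lambda>y. c * (1 - norm y) powr (\<alpha> - 2))"
      using r by (intro continuous_intros continuous_on_powr) auto
    show "\<bar>c * (1 - norm y) powr (\<alpha> - 2)\<bar> \<le> c * 1" if "y \<in> ball 0 r" for y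
    proof -
      have "(1 - norm y) powr (\<alpha> - 2) \<le> 1" using that r \<alpha> by (intro powr_le1) auto
      then show ?thesis using c mult_left_mono[of _ 1 c] by (simp add: abs_mult)
    qed
  qed
  have "(\<integral>\<^sup>+ y. ennreal (indicator (ball 0 r) y * (cutoff \<alpha> r y * lap_u y)) \<partial>lborel)
      = ennreal (integral\<^sup>L lborel (\<lambda>y. indicator (ball 0 r) y * (u y * cutoff_laplacian \<alpha> r y)))"
    using r \<alpha> by (intro nn_integral_cutoff_lap_u_eq) auto
  also have "\<dots> \<le> ennreal (integral\<^sup>L lborel P)"
  proof (intro ennreal_leI integral_mono[OF green_identity(2)[OF less_imp_le[OF r(1)] r(2) \<alpha>] integrable_P])
    show "indicator (ball 0 r) y * (u y * cutoff_laplacian \<alpha> r y) \<le> P y" for y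
      using u_cutoff_laplacian_le[of y r \<alpha>] r \<alpha>
      by (cases "y \<in> ball 0 r") (simp_all add: P_def c_def mult.assoc)
  qed
  also have "\<dots> = (\<integral>\<^sup>+ y. ennreal (P y) \<partial>lborel)"
    using c u_nonneg by (intro nn_integral_eq_integral[symmetric] integrable_P) (auto simp: P_def)
  also have "\<dots> \<le> (\<integral>\<^sup>+ y. ennreal c * ennreal (weighted_u \<alpha> y) \<partial>lborel)"
  proof (intro nn_integral_mono)
    have "P y \<le> c * weighted_u \<alpha> y" for y
      using c r u_nonneg[of y] by (cases "y \<in> ball 0 r") (auto simp: P_def weighted_u_def)
    then show "ennreal (P y) \<le> ennreal c * ennreal (weighted_u \<alpha> y)" for y
      using c by (simp add: ennreal_mult'[symmetric] ennreal_leI)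
  qed
  also have "\<dots> = ennreal c * (\<integral>\<^sup>+ y. ennreal (weighted_u \<alpha> y) \<partial>lborel)"
    by (rule nn_integral_cmult) (use weighted_u_measurable in measurable)
  finally show ?thesis .
qed

lemma nn_integral_weighted_lap_le:
  assumes \<alpha>: "\<alpha> \<ge> 2"
  shows "(\<integral>\<^sup>+ y. ennreal (weighted_lap \<alpha> y) \<partial>lborel)
    \<le> ennreal (4 * \<alpha> * (\<alpha> - 1) * 2 powr (\<alpha> - 2)) * (\<integral>\<^sup>+ y. ennreal (weighted_u \<alpha> y) \<partial>lborel)"
proof (rule nn_integral_le_of_incseq_tendsto)
  define g where "g k y = indicator (ball 0 (radius_seq k)) y * (cutoff \<alpha> (radius_seq k) y * lap_u y)" for k y
  show "g k \<in> borel_measurable lborel" for k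
    using green_identity(1)[of "radius_seq k" \<alpha>] radius_seq_pos[of k] radius_seq_less_1[of k] \<alpha>
    by (simp add: g_def[abs_def] borel_measurable_integrable)
  show "g k y \<le> g (Suc k) y" for k y
  proof (cases "y \<in> ball 0 (radius_seq k)")
    case True
    then have "y \<in> ball 0 (radius_seq (Suc k))" "y \<in> ball 0 1"
      using radius_seq_mono[of k] radius_seq_less_1[of k] by auto
    moreover have "cutoff \<alpha> (radius_seq k) y \<le> cutoff \<alpha> (radius_seq (Suc k)) y"
      using radius_seq_mono radius_seq_pos \<alpha> by (intro cutoff_mono) (auto simp: less_imp_le)
    ultimately show ?thesis
      using True lap_u_nonneg_on_ball[of y] by (simp add: g_def mult_right_mono)
  qed (use cutoff_lap_u_nonneg[OF less_imp_le[OF radius_seq_less_1]] in \<open>simp add: g_def\<close>)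
  show "(\<lambda>k. g k y) \<longlonglongrightarrow> weighted_lap \<alpha> y" for y
  proof (cases "y \<in> ball 0 1")
    case True
    then have "(\<lambda>k. cutoff \<alpha> (radius_seq k) y * lap_u y) \<longlonglongrightarrow> (1 - (norm y)\<^sup>2) powr \<alpha> * lap_u y"
      by (intro tendsto_intros tendsto_cutoff radius_seq_tendsto_1) simp
    moreover have "eventually (\<lambda>k. cutoff \<alpha> (radius_seq k) y * lap_u y = g k y) sequentially"
      using eventually_norm_less_radius[of y] True by (simp add: g_def eventually_mono)
    ultimately show ?thesis using True by (simp add: weighted_lap_def Lim_transform_eventually)
  next
    case False
    then have "g k y = 0" for k using radius_seq_less_1[of k] by (auto simp: g_def)
    then show ?thesis using False by (simp add: weighted_lap_def)
  qed
  show "(\<integral>\<^sup>+ y. ennreal (g k y) \<partial>lborel)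
      \<le> ennreal (4 * \<alpha> * (\<alpha> - 1) * 2 powr (\<alpha> - 2)) * (\<integral>\<^sup>+ y. ennreal (weighted_u \<alpha> y) \<partial>lborel)" for k
    unfolding g_def using nn_integral_cutoff_lap_u_le[OF radius_seq_pos radius_seq_less_1 \<alpha>] .
qed

lemma nn_integral_ball_weight_u_le:
  assumes r: "0 < r" "r < 1" and \<alpha>: "\<alpha> \<ge> 2" and K: "0 \<le> K"
    and pointwise: "\<And>y. y \<in> ball 0 r \<Longrightarrow>
       \<alpha> * ball_defect r y powr (\<alpha> - 2) * u y \<le> u y * cutoff_laplacian \<alpha> r y + K * indicator (cball 0 \<rho>) y"
  shows "(\<integral>\<^sup>+ y. ennreal (indicator (ball 0 r) y * (\<alpha> * ball_defect r y powr (\<alpha> - 2) * u y)) \<partial>lborel)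
    \<le> (\<integral>\<^sup>+ y. ennreal (weighted_lap \<alpha> y) \<partial>lborel) + ennreal (K * measure lborel (cball (0::complex^'n) \<rho>))"
proof -
  let ?g = "\<lambda>y. indicator (ball 0 r) y * (\<alpha> * ball_defect r y powr (\<alpha> - 2) * u y)"
  let ?A = "\<lambda>y. indicator (ball 0 r) y * (cutoff \<alpha> r y * lap_u y)"
  let ?B = "\<lambda>y. indicator (ball 0 r) y * (u y * cutoff_laplacian \<alpha> r y)"
  let ?K = "K * measure lborel (cball (0::complex^'n) \<rho>)"
  have r0: "0 \<le> r" using r by simp
  have integrable_g: "integrable lborel ?g"
  proof (rule integrable_ball_times_u[OF r(2)])
    show "continuous_on (ball 0 r) (\<lambda>y. \<alpha> * ball_defect r y powr (\<alpha> - 2))"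
      by (intro continuous_intros continuous_on_ball_defect_powr)
    show "\<bar>\<alpha> * ball_defect r y powr (\<alpha> - 2)\<bar> \<le> \<alpha> * 1" if "y \<in> ball 0 r" for y
      using ball_defect_powr_le_1[OF that, of "\<alpha> - 2"] r \<alpha> by (simp add: abs_mult)
  qed
  have integrable_K: "integrable lborel (\<lambda>y. K * indicator (cball (0::complex^'n) \<rho>) y)"
    by (intro integrable_mult_right integrable_real_indicator)
       (use emeasure_lborel_cball_finite[of "0::complex^'n" \<rho>] in auto)
  have "integral\<^sup>L lborel ?g \<le> integral\<^sup>L lborel (\<lambda>y. ?B y + K * indicator (cball 0 \<rho>) y)"
    using pointwise K
    by (intro integral_mono integrable_g Bochner_Integration.integrable_add
        green_identity(2)[OF r0 r(2) \<alpha>] integrable_K) (auto simp: indicator_def)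
  also have "\<dots> = integral\<^sup>L lborel ?B + ?K"
    using green_identity(2)[OF r0 r(2) \<alpha>] integrable_K by simp
  finally have integral_le: "integral\<^sup>L lborel ?g \<le> integral\<^sup>L lborel ?B + ?K" .
  have "(\<integral>\<^sup>+ y. ennreal (?g y) \<partial>lborel) = ennreal (integral\<^sup>L lborel ?g)"
    using \<alpha> u_nonneg by (intro nn_integral_eq_integral integrable_g) auto
  also have "\<dots> \<le> ennreal (integral\<^sup>L lborel ?B + ?K)"
    using integral_le by (rule ennreal_leI)
  also have "\<dots> = (\<integral>\<^sup>+ y. ennreal (?A y) \<partial>lborel) + ennreal ?K"
    using K nn_integral_cutoff_lap_u_eq[OF r0 r(2) \<alpha>] by (simp add: ennreal_plus)
  also have "\<dots> \<le> (\<integral>\<^sup>+ y. ennreal (weighted_lap \<alpha> y) \<partial>lborel) + ennreal ?K"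
    using r \<alpha> cutoff_lap_u_le_weighted_lap by (intro add_right_mono nn_integral_mono ennreal_leI) auto
  finally show ?thesis .
qed

lemma nn_integral_weight_u_le:
  assumes \<alpha>: "\<alpha> \<ge> 2"
  obtains K where "(\<integral>\<^sup>+ y. ennreal (indicator (ball 0 1) y * (\<alpha> * (1 - (norm y)\<^sup>2) powr (\<alpha> - 2) * u y)) \<partial>lborel)
    \<le> (\<integral>\<^sup>+ y. ennreal (weighted_lap \<alpha> y) \<partial>lborel) + ennreal K"
proof -
  obtain K \<rho> where \<rho>K: "0 \<le> K"
    "\<And>r y. r \<le> 1 \<Longrightarrow> y \<in> ball 0 r \<Longrightarrow>
       \<alpha> * ball_defect r y powr (\<alpha> - 2) * u y \<le> u y * cutoff_laplacian \<alpha> r y + K * indicator (cball 0 \<rho>) y"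
    using weight_u_le_cutoff_laplacian[OF \<alpha>] by metis
  define g where "g k y = indicator (ball 0 (radius_seq k)) y * (\<alpha> * ball_defect (radius_seq k) y powr (\<alpha> - 2) * u y)" for k y
  show ?thesis
  proof (rule that, rule nn_integral_le_of_incseq_tendsto)
    show "g k \<in> borel_measurable lborel" for k
      unfolding g_def[abs_def]
      by (intro borel_measurable_indicator_ball_times continuous_intros continuous_on_ball_defect_powr
          continuous_on_subset[OF continuous_on_u]) (use radius_seq_less_1[of k] in auto)
    show "g k y \<le> g (Suc k) y" for k y
    proof (cases "y \<in> ball 0 (radius_seq k)")
      case True
      then have y: "y \<in> ball 0 (radius_seq (Suc k))" using radius_seq_mono[of k] by auto
      have "ball_defect (radius_seq k) y powr (\<alpha> - 2) \<le> ball_defect (radius_seq (Suc k)) y powr (\<alpha> - 2)"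
        using ball_defect_pos[of y "radius_seq k"] True ball_defect_mono[OF radius_seq_mono less_imp_le[OF radius_seq_pos]] \<alpha>
        by (intro powr_mono2) auto
      then show ?thesis using True y \<alpha> u_nonneg[of y] by (simp add: g_def mult_right_mono)
    qed (use \<alpha> u_nonneg in \<open>simp add: g_def\<close>)
    show "(\<lambda>k. g k y) \<longlonglongrightarrow> indicator (ball 0 1) y * (\<alpha> * (1 - (norm y)\<^sup>2) powr (\<alpha> - 2) * u y)" for y
    proof (cases "y \<in> ball 0 1")
      case True
      then have "(\<lambda>k. \<alpha> * ball_defect (radius_seq k) y powr (\<alpha> - 2) * u y) \<longlonglongrightarrow> \<alpha> * (1 - (norm y)\<^sup>2) powr (\<alpha> - 2) * u y"
        by (intro tendsto_intros tendsto_ball_defect_powr radius_seq_tendsto_1) simp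
      moreover have "eventually (\<lambda>k. \<alpha> * ball_defect (radius_seq k) y powr (\<alpha> - 2) * u y = g k y) sequentially"
        using eventually_norm_less_radius[of y] True by (simp add: g_def eventually_mono)
      ultimately show ?thesis using True by (simp add: Lim_transform_eventually)
    next
      case False
      then have "g k y = 0" for k using radius_seq_less_1[of k] by (auto simp: g_def)
      then show ?thesis using False by simp
    qed
    show "(\<integral>\<^sup>+ y. ennreal (g k y) \<partial>lborel)
        \<le> (\<integral>\<^sup>+ y. ennreal (weighted_lap \<alpha> y) \<partial>lborel) + ennreal (K * measure lborel (cball (0::complex^'n) \<rho>))" for k
      unfolding g_def
      by (rule nn_integral_ball_weight_u_le[OF radius_seq_pos radius_seq_less_1 \<alpha> \<rho>K(1)
          \<rho>K(2)[OF less_imp_le[OF radius_seq_less_1]]])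
  qed
qed

lemma nn_integral_weighted_u_finite:
  assumes \<alpha>: "\<alpha> \<ge> 2" and finite: "(\<integral>\<^sup>+ y. ennreal (weighted_lap \<alpha> y) \<partial>lborel) < \<infinity>"
  shows "(\<integral>\<^sup>+ y. ennreal (weighted_u \<alpha> y) \<partial>lborel) < \<infinity>"
proof -
  define D where "D y = indicator (ball 0 1) y * (\<alpha> * (1 - (norm y)\<^sup>2) powr (\<alpha> - 2) * u y)" for y
  obtain K where "(\<integral>\<^sup>+ y. ennreal (D y) \<partial>lborel) \<le> (\<integral>\<^sup>+ y. ennreal (weighted_lap \<alpha> y) \<partial>lborel) + ennreal K"
    using nn_integral_weight_u_le[OF \<alpha>] unfolding D_def by blast
  also have "\<dots> < \<infinity>" using finite by simp
  finally have D_finite: "(\<integral>\<^sup>+ y. ennreal (D y) \<partial>lborel) < \<infinity>" .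
  have "weighted_u \<alpha> y \<le> (1 / \<alpha>) * D y" for y
  proof (cases "y \<in> ball 0 1")
    case True
    then have ny: "norm y < 1" by simp
    have "1 - norm y \<le> 1 - (norm y)\<^sup>2"
      using ny mult_left_mono[of "norm y" 1 "norm y"] by (simp add: power2_eq_square)
    then have "(1 - norm y) powr (\<alpha> - 2) * u y \<le> (1 - (norm y)\<^sup>2) powr (\<alpha> - 2) * u y"
      using ny \<alpha> u_nonneg by (intro mult_right_mono powr_mono2) auto
    then show ?thesis using True \<alpha> by (simp add: weighted_u_def D_def)
  qed (simp add: weighted_u_def D_def)
  then have "(\<integral>\<^sup>+ y. ennreal (weighted_u \<alpha> y) \<partial>lborel) \<le> (\<integral>\<^sup>+ y. ennreal (1 / \<alpha>) * ennreal (D y) \<partial>lborel)"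
    using \<alpha> by (intro nn_integral_mono) (simp add: ennreal_mult'[symmetric] ennreal_leI)
  also have "\<dots> = ennreal (1 / \<alpha>) * (\<integral>\<^sup>+ y. ennreal (D y) \<partial>lborel)"
    unfolding D_def[abs_def]
    by (rule nn_integral_cmult, intro measurable_compose[OF _ measurable_ennreal] borel_measurable_indicator_ball_times
        continuous_intros continuous_on_powr continuous_on_u) (use power2_norm_less_1 in force)
  also have "\<dots> < \<infinity>" using D_finite by (simp add: ennreal_mult_less_top)
  finally show ?thesis .
qed

end

theorem theorem1p5:
  fixes f :: "complex^'n \<Rightarrow> complex" and p \<alpha> :: real
  assumes "C2_on (ball 0 1) f"
    and "\<forall>z\<in>ball 0 1. Re (f z * cnj (laplacian f z)) \<ge> 0"
    and "p \<ge> 2" and "\<alpha> \<ge> 2"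
  shows "(\<integral>\<^sup>+ z. ennreal ((1 - (norm z)\<^sup>2) powr \<alpha> * laplacian (\<lambda>w. norm (f w) powr p) z) \<partial>dVN) < \<infinity>
         \<longleftrightarrow> f \<in> b_space (\<alpha> - 2) p"
proof -
  interpret norm_powr_of_C2_Re_nonneg f p
    by unfold_locales (use assms in auto)
  have lap: "(\<integral>\<^sup>+ z. ennreal ((1 - (norm z)\<^sup>2) powr \<alpha> * laplacian (\<lambda>w. norm (f w) powr p) z) \<partial>dVN) < \<infinity>
      \<longleftrightarrow> (\<integral>\<^sup>+ z. ennreal (weighted_lap \<alpha> z) \<partial>lborel) < \<infinity>"
    using assms(4)
    by (intro nn_integral_dVN_finite_iff weighted_lap_measurable)
       (auto simp: weighted_lap_def laplacian_norm_powr_eq)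
  have u: "f \<in> b_space (\<alpha> - 2) p \<longleftrightarrow> (\<integral>\<^sup>+ z. ennreal (weighted_u \<alpha> z) \<partial>lborel) < \<infinity>"
    using nn_integral_dVN_finite_iff[OF weighted_u_measurable,
        of "\<lambda>z. (1 - norm z) powr (\<alpha> - 2) * norm (f z) powr p"] continuous_on_f
    by (simp add: b_space_def weighted_u_def u_def)
  show ?thesis
    unfolding lap u
  proof
    assume "(\<integral>\<^sup>+ z. ennreal (weighted_u \<alpha> z) \<partial>lborel) < \<infinity>"
    then have "ennreal (4 * \<alpha> * (\<alpha> - 1) * 2 powr (\<alpha> - 2)) * (\<integral>\<^sup>+ z. ennreal (weighted_u \<alpha> z) \<partial>lborel) < \<infinity>"
      by (simp add: ennreal_mult_less_top)
    with nn_integral_weighted_lap_le[OF assms(4)]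
    show "(\<integral>\<^sup>+ z. ennreal (weighted_lap \<alpha> z) \<partial>lborel) < \<infinity>" by (rule le_less_trans)
  qed (rule nn_integral_weighted_u_finite[OF assms(4)])
qed

end
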